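(* Let $N,l$ be positive integers, $m=2l$, $a=\begin{bmatrix}0&1\\-1&0\end{bmatrix}$, and for $z\in\mathbb{R}^l$ let $S(z)=\mathrm{diag}(z)\otimes a$. Let $\omega=\mathrm{col}(\omega_{01},\dots,\omega_{0l})\in\mathbb{R}^l$ with $\omega_{0k}>0$ for all $k$ and such that all eigenvalues of $S(\omega)$ are simple (i.e. the $\omega_{0k}$ are pairwise distinct), and consider the leader system $\dot v=S(\omega)v$, $v\in\mathbb{R}^m$. Let $\bar{\mathcal G}$ be a digraph with node set $\{0,1,\dots,N\}$ such that $\bar{\mathcal G}$ contains a spanning tree rooted at node $0$ and the subgraph $\mathcal G$ induced on $\{1,\dots,N\}$ (obtained by removing all edges between node $0$ and the other nodes) is undirected. For $i=1,\dots,N$ let $\bar{\mathcal N}_i=\{j:(j,i)\text{ is an edge of }\bar{\mathcal G}\}$. Consider, for $i=1,\dots,N$, $$\dot\eta_i=S(\omega_i)\eta_i+\mu_1 e_{vi},\qquad \dot\omega_i=\mu_2\,\phi(e_{vi})\,\eta_i,\qquad e_{vi}=\sum_{j\in\bar{\mathcal N}_i}(\eta_j-\eta_i),$$ where $\eta_0=v$, $\eta_i\in\mathbb{R}^m$, $\omega_i\in\mathbb{R}^l$, $\mu_1,\mu_2>0$, and for $x\in\mathbb{R}^m$, $\phi(x)\in\mathbb{R}^{l\times m}$ is the matrix whose $k$-th row has entry $-x_{2k}$ in column $2k-1$, $x_{2k-1}$ in column $2k$, and zeros elsewhere. Let $\tilde\omega=\mathrm{col}(\omega_1-\omega,\dots,\omega_N-\omega)$.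 If $\mathrm{col}(v_{2i-1}(0),v_{2i}(0))\neq0$ for all $i=1,\dots,l$, then (i) $v(t)$ is persistently exciting; and (ii) for any initial conditions $\eta_i(0),\omega_i(0)$, $\lim_{t\to\infty}\tilde\omega(t)=0$.
   Context: A bounded piecewise continuous function $f:[0,\infty)\to\mathbb{R}^n$ is persistently exciting (PE) if there exist constants $\epsilon>0$, $t_0\ge 0$, $T_0>0$ such that $\frac{1}{T_0}\int_t^{t+T_0}f(s)f(s)^T\,ds\ge\epsilon I_n$ for all $t\ge t_0$. $\otimes$ is the Kronecker product; $\mathrm{col}(\cdot)$ stacks vectors into a column. *)

theory Defs
  imports "HOL-Analysis.Analysis"
begin

text \<open>Conventions: vectors in R^n are functions nat => real with components 0..n-1
  (0-based; component 2k, 2k+1 here correspond to 2k+1, 2k+2 in the paper);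
  matrices are functions nat => nat => real with explicit sizes.\<close>

type_synonym rvec = "nat \<Rightarrow> real"
type_synonym rmat = "nat \<Rightarrow> nat \<Rightarrow> real"

definition mulv :: "nat \<Rightarrow> rmat \<Rightarrow> rvec \<Rightarrow> rvec" where
  "mulv n M x = (\<lambda>i. \<Sum>j<n. M i j * x j)"

definition diagm :: "rvec \<Rightarrow> rmat" where
  "diagm z = (\<lambda>i j. if i = j then z i else 0)"

definition kron :: "nat \<Rightarrow> nat \<Rightarrow> rmat \<Rightarrow> rmat \<Rightarrow> rmat" where
  "kron p q A B = (\<lambda>i j. A (i div p) (j div q) * B (i mod p) (j mod q))"

definition amat :: rmat where
  "amat = (\<lambda>i j. if i = 0 \<and> j = 1 then 1 else if i = 1 \<and> j = 0 then -1 else 0)"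

definition Smat :: "rvec \<Rightarrow> rmat" where
  "Smat z = kron 2 2 (diagm z) amat"

definition phim :: "rvec \<Rightarrow> rmat" where
  "phim x = (\<lambda>k j. if j = 2*k then - x (2*k+1) else if j = 2*k+1 then x (2*k) else 0)"

definition PE :: "nat \<Rightarrow> (real \<Rightarrow> rvec) \<Rightarrow> bool" where
  "PE n f \<longleftrightarrow>
     (\<exists>B. \<forall>t\<ge>0. \<forall>k<n. \<bar>f t k\<bar> \<le> B) \<and>
     (\<exists>\<epsilon>>0. \<exists>t0\<ge>0. \<exists>T0>0. \<forall>t\<ge>t0. \<forall>x::rvec.
        (\<Sum>i<n. \<Sum>j<n. x i * ((1/T0) * integral {t..t+T0} (\<lambda>s. f s i * f s j)
            - (if i = j then \<epsilon> else 0)) * x j) \<ge> 0)"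

end

theory Submission
  imports Defs
begin

text \<open>The leader splits into \<open>l\<close> planar rotations: the pair \<open>(v (2k), v (2k+1))\<close>
  rotates with frequency \<open>\<omega>0 k\<close> and keeps a positive amplitude. Hence \<open>x \<bullet> v(s)\<close> is a
  trigonometric polynomial with distinct positive frequencies, and the integral of its square
  over a window of length \<open>T\<close> is \<open>T/2\<close> times the energy of its coefficients up to an error
  of order \<open>l/\<gamma>\<close>, where \<open>\<gamma>\<close> is the smallest gap between the frequencies; for large \<open>T\<close>
  this is persistent excitation.

  The followers decouple block by block as well. For the errors \<open>\<eta>\<^sub>i - v\<close> and
  \<open>\<omega>\<^sub>i - \<omega>0\<close>, the graph disagreement of the first plus \<open>1/\<mu>2\<close> times the squared norm of the
  second is a Lyapunov function with derivative \<open>-2 \<mu>1 \<Sum> |e\<^sub>v\<^sub>i|\<^sup>2\<close>. Barbalat's lemma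
  gives \<open>e\<^sub>v\<^sub>i \<rightarrow> 0\<close>, hence the disagreement and, along the spanning tree, all errors
  \<open>\<eta>\<^sub>i - v\<close> tend to zero. A second application of Barbalat's lemma makes their derivatives
  vanish, which leaves \<open>(\<omega>\<^sub>i - \<omega>0) v \<rightarrow> 0\<close> blockwise; as the amplitude of every block of
  the leader is constant and positive, \<open>\<omega>\<^sub>i \<rightarrow> \<omega>0\<close>.\<close>

section \<open>Calculus on the half-line\<close>

definition deriv_halfline :: "(real \<Rightarrow> real) \<Rightarrow> (real \<Rightarrow> real) \<Rightarrow> bool" where
  "deriv_halfline f f' \<longleftrightarrow> (\<forall>t\<ge>0. (f has_real_derivative f' t) (at t within {0..}))"

lemma deriv_halfline_MVT:
  assumes "deriv_halfline f f'" "0 \<le> a" "a < b"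
  obtains z where "a < z" "z < b" "f b - f a = (b - a) * f' z"
proof -
  have deriv: "(f has_real_derivative f' x) (at x within {0..})" if "x \<ge> 0" for x
    using assms(1) that unfolding deriv_halfline_def by auto
  have "continuous_on {0..} f"
    by (rule DERIV_continuous_on[of _ _ f']) (use deriv in auto)
  then have cont: "continuous_on {a..b} f"
    by (rule continuous_on_subset) (use assms in auto)
  have deriv_at: "(f has_real_derivative f' x) (at x)" if "a < x" for x
  proof -
    have "x \<in> interior {0::real..}" using that assms by auto
    then have "at x within {0..} = at x" by (rule at_within_interior)
    then show ?thesis using deriv[of x] that assms by auto
  qed
  obtain d z where "a < z" "z < b" "DERIV f z :> d" "f b - f a = (b - a) * d"
    using MVT[OF assms(3) cont] deriv_at real_differentiable_def by blast
  moreover have "d = f' z" using DERIV_unique[OF \<open>DERIV f z :> d\<close> deriv_at[OF \<open>a < z\<close>]] .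
  ultimately show ?thesis using that[of z] by simp
qed

lemma deriv_halfline_antimono:
  assumes "deriv_halfline f f'" "\<forall>t\<ge>0. f' t \<le> 0" "0 \<le> s" "s \<le> t"
  shows "f t \<le> f s"
proof (cases "s = t")
  case False
  then have "s < t" using assms(4) by simp
  obtain z where "s < z" "z < t" "f t - f s = (t - s) * f' z"
    by (rule deriv_halfline_MVT[OF assms(1,3) \<open>s < t\<close>])
  moreover have "(t - s) * f' z \<le> 0"
    using assms(2-4) \<open>s < z\<close> by (intro mult_nonneg_nonpos) auto
  ultimately show ?thesis by linarith
qed simp

lemma deriv_halfline_zero_const:
  assumes "deriv_halfline f (\<lambda>t. 0)" "0 \<le> t"
  shows "f t = f 0"
proof -
  have "deriv_halfline (\<lambda>t. - f t) (\<lambda>t. 0)"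
    using assms(1) unfolding deriv_halfline_def by (auto intro!: derivative_eq_intros)
  then have "- f t \<le> - f 0"
    by (rule deriv_halfline_antimono) (use assms in auto)
  moreover have "f t \<le> f 0"
    by (rule deriv_halfline_antimono[OF assms(1)]) (use assms in auto)
  ultimately show ?thesis by simp
qed

definition bounded_halfline :: "(real \<Rightarrow> real) \<Rightarrow> bool" where
  "bounded_halfline f \<longleftrightarrow> (\<exists>B. \<forall>t\<ge>0. \<bar>f t\<bar> \<le> B)"

definition lipschitz_halfline :: "(real \<Rightarrow> real) \<Rightarrow> bool" where
  "lipschitz_halfline f \<longleftrightarrow> (\<exists>K. \<forall>s\<ge>0. \<forall>t\<ge>0. \<bar>f s - f t\<bar> \<le> K * \<bar>s - t\<bar>)"

definition bounded_lipschitz_halfline :: "(real \<Rightarrow> real) \<Rightarrow> bool" where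
  "bounded_lipschitz_halfline f \<longleftrightarrow> bounded_halfline f \<and> lipschitz_halfline f"

lemma bounded_halfline_const: "bounded_halfline (\<lambda>t. c)"
  unfolding bounded_halfline_def by auto

lemma bounded_halfline_add:
  assumes "bounded_halfline f" "bounded_halfline g"
  shows "bounded_halfline (\<lambda>t. f t + g t)"
proof -
  obtain B C where B: "\<forall>t\<ge>0. \<bar>f t\<bar> \<le> B" and C: "\<forall>t\<ge>0. \<bar>g t\<bar> \<le> C"
    using assms unfolding bounded_halfline_def by blast
  have "\<bar>f t + g t\<bar> \<le> B + C" if "t \<ge> 0" for t
    using B[rule_format, OF that] C[rule_format, OF that] abs_triangle_ineq[of "f t" "g t"] by linarith
  then show ?thesis unfolding bounded_halfline_def by blast
qed

lemma bounded_halfline_diff: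
  assumes "bounded_halfline f" "bounded_halfline g"
  shows "bounded_halfline (\<lambda>t. f t - g t)"
proof -
  obtain B C where B: "\<forall>t\<ge>0. \<bar>f t\<bar> \<le> B" and C: "\<forall>t\<ge>0. \<bar>g t\<bar> \<le> C"
    using assms unfolding bounded_halfline_def by blast
  have "\<bar>f t - g t\<bar> \<le> B + C" if "t \<ge> 0" for t
    using B[rule_format, OF that] C[rule_format, OF that] abs_triangle_ineq4[of "f t" "g t"] by linarith
  then show ?thesis unfolding bounded_halfline_def by blast
qed

lemma bounded_halfline_mult:
  assumes "bounded_halfline f" "bounded_halfline g"
  shows "bounded_halfline (\<lambda>t. f t * g t)"
proof -
  obtain B C where B: "\<forall>t\<ge>0. \<bar>f t\<bar> \<le> B" and C: "\<forall>t\<ge>0. \<bar>g t\<bar> \<le> C"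
    using assms unfolding bounded_halfline_def by blast
  have "\<bar>f t * g t\<bar> \<le> B * C" if "t \<ge> 0" for t
    unfolding abs_mult by (rule mult_mono) (use B C that in auto)
  then show ?thesis unfolding bounded_halfline_def by blast
qed

lemma bounded_halfline_sum:
  "finite A \<Longrightarrow> (\<And>i. i \<in> A \<Longrightarrow> bounded_halfline (f i)) \<Longrightarrow> bounded_halfline (\<lambda>t. \<Sum>i\<in>A. f i t)"
  by (induction A rule: finite_induct) (auto intro: bounded_halfline_const bounded_halfline_add)

lemma bounded_halfline_of_square_le:
  assumes "\<forall>t\<ge>0. (f t)\<^sup>2 \<le> M"
  shows "bounded_halfline f"
proof -
  have "\<bar>f t\<bar> \<le> sqrt M" if "t \<ge> 0" for t
    using real_sqrt_le_mono[OF assms[rule_format, OF that]] by simp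
  then show ?thesis unfolding bounded_halfline_def by blast
qed

lemma lipschitz_halfline_const: "lipschitz_halfline (\<lambda>t. c)"
  unfolding lipschitz_halfline_def by (auto intro!: exI[of _ 0])

lemma lipschitz_halfline_add:
  assumes "lipschitz_halfline f" "lipschitz_halfline g"
  shows "lipschitz_halfline (\<lambda>t. f t + g t)"
proof -
  obtain K M where K: "\<forall>s\<ge>0. \<forall>t\<ge>0. \<bar>f s - f t\<bar> \<le> K * \<bar>s - t\<bar>"
    and M: "\<forall>s\<ge>0. \<forall>t\<ge>0. \<bar>g s - g t\<bar> \<le> M * \<bar>s - t\<bar>"
    using assms unfolding lipschitz_halfline_def by blast
  have "\<bar>f s + g s - (f t + g t)\<bar> \<le> (K + M) * \<bar>s - t\<bar>" if "s \<ge> 0" "t \<ge> 0" for s t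
    using K[rule_format, OF that] M[rule_format, OF that] by (simp add: distrib_right abs_le_iff)
  then show ?thesis unfolding lipschitz_halfline_def by blast
qed

lemma lipschitz_halfline_diff:
  assumes "lipschitz_halfline f" "lipschitz_halfline g"
  shows "lipschitz_halfline (\<lambda>t. f t - g t)"
proof -
  have "lipschitz_halfline (\<lambda>t. - g t)"
    using assms(2) unfolding lipschitz_halfline_def by (simp add: abs_minus_commute)
  from lipschitz_halfline_add[OF assms(1) this] show ?thesis by simp
qed

lemma lipschitz_halfline_mult:
  assumes "bounded_halfline f" "bounded_halfline g" "lipschitz_halfline f" "lipschitz_halfline g"
  shows "lipschitz_halfline (\<lambda>t. f t * g t)"
proof -
  obtain B C where B: "\<forall>t\<ge>0. \<bar>f t\<bar> \<le> B" and C: "\<forall>t\<ge>0. \<bar>g t\<bar> \<le> C"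
    using assms(1,2) unfolding bounded_halfline_def by blast
  obtain K M where K: "\<forall>s\<ge>0. \<forall>t\<ge>0. \<bar>f s - f t\<bar> \<le> K * \<bar>s - t\<bar>"
    and M: "\<forall>s\<ge>0. \<forall>t\<ge>0. \<bar>g s - g t\<bar> \<le> M * \<bar>s - t\<bar>"
    using assms(3,4) unfolding lipschitz_halfline_def by blast
  have "\<bar>f s * g s - f t * g t\<bar> \<le> (B * M + C * K) * \<bar>s - t\<bar>" if st: "s \<ge> 0" "t \<ge> 0" for s t
  proof -
    have "f s * g s - f t * g t = f s * (g s - g t) + g t * (f s - f t)"
      by (simp add: algebra_simps)
    then have "\<bar>f s * g s - f t * g t\<bar> \<le> \<bar>f s\<bar> * \<bar>g s - g t\<bar> + \<bar>g t\<bar> * \<bar>f s - f t\<bar>"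
      by (metis abs_mult abs_triangle_ineq)
    also have "\<dots> \<le> B * (M * \<bar>s - t\<bar>) + C * (K * \<bar>s - t\<bar>)"
      by (intro add_mono mult_mono) (use B C K M st in auto)
    finally show ?thesis by (simp add: algebra_simps)
  qed
  then show ?thesis unfolding lipschitz_halfline_def by blast
qed

lemma lipschitz_halfline_of_deriv:
  assumes "deriv_halfline f f'" "bounded_halfline f'"
  shows "lipschitz_halfline f"
proof -
  obtain B where B: "\<forall>t\<ge>0. \<bar>f' t\<bar> \<le> B"
    using assms(2) unfolding bounded_halfline_def by blast
  have ordered: "\<bar>f b - f a\<bar> \<le> B * \<bar>b - a\<bar>" if ab: "0 \<le> a" "a < b" for a b
  proof -
    obtain z where "a < z" "z < b" "f b - f a = (b - a) * f' z"
      by (rule deriv_halfline_MVT[OF assms(1) ab])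
    moreover have "\<bar>f' z\<bar> \<le> B" using B ab \<open>a < z\<close> by auto
    ultimately show ?thesis using ab by (simp add: abs_mult mult.commute mult_left_mono)
  qed
  have "\<bar>f s - f t\<bar> \<le> B * \<bar>s - t\<bar>" if "s \<ge> 0" "t \<ge> 0" for s t
    using ordered[of s t] ordered[of t s] that
    by (cases s t rule: linorder_cases) (simp_all add: abs_minus_commute)
  then show ?thesis unfolding lipschitz_halfline_def by blast
qed

lemma bounded_lipschitz_halfline_of_deriv:
  "deriv_halfline f f' \<Longrightarrow> bounded_halfline f \<Longrightarrow> bounded_halfline f' \<Longrightarrow> bounded_lipschitz_halfline f"
  unfolding bounded_lipschitz_halfline_def using lipschitz_halfline_of_deriv by blast

lemma bounded_lipschitz_halfline_const: "bounded_lipschitz_halfline (\<lambda>t. c)"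
  unfolding bounded_lipschitz_halfline_def
  using bounded_halfline_const lipschitz_halfline_const by blast

lemma bounded_lipschitz_halfline_add:
  "bounded_lipschitz_halfline f \<Longrightarrow> bounded_lipschitz_halfline g \<Longrightarrow> bounded_lipschitz_halfline (\<lambda>t. f t + g t)"
  unfolding bounded_lipschitz_halfline_def
  using bounded_halfline_add lipschitz_halfline_add by blast

lemma bounded_lipschitz_halfline_diff:
  "bounded_lipschitz_halfline f \<Longrightarrow> bounded_lipschitz_halfline g \<Longrightarrow> bounded_lipschitz_halfline (\<lambda>t. f t - g t)"
  unfolding bounded_lipschitz_halfline_def
  using bounded_halfline_diff lipschitz_halfline_diff by blast

lemma bounded_lipschitz_halfline_mult:
  "bounded_lipschitz_halfline f \<Longrightarrow> bounded_lipschitz_halfline g \<Longrightarrow> bounded_lipschitz_halfline (\<lambda>t. f t * g t)"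
  unfolding bounded_lipschitz_halfline_def
  using bounded_halfline_mult lipschitz_halfline_mult by blast

lemma bounded_lipschitz_halfline_sum:
  "finite A \<Longrightarrow> (\<And>i. i \<in> A \<Longrightarrow> bounded_lipschitz_halfline (f i))
    \<Longrightarrow> bounded_lipschitz_halfline (\<lambda>t. \<Sum>i\<in>A. f i t)"
  by (induction A rule: finite_induct)
    (auto intro: bounded_lipschitz_halfline_const bounded_lipschitz_halfline_add)

lemma barbalat:
  assumes deriv: "deriv_halfline f f'" and lim: "(f \<longlongrightarrow> L) at_top"
    and lip: "lipschitz_halfline f'"
  shows "(f' \<longlongrightarrow> 0) at_top"
proof (rule tendstoI)
  fix \<epsilon> :: real assume "\<epsilon> > 0"
  obtain K where K: "\<forall>s\<ge>0. \<forall>t\<ge>0. \<bar>f' s - f' t\<bar> \<le> K * \<bar>s - t\<bar>"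
    using lip unfolding lipschitz_halfline_def by blast
  define \<delta> where "\<delta> = \<epsilon> / (2 * (\<bar>K\<bar> + 1))"
  have \<delta>: "\<delta> > 0" "(\<bar>K\<bar> + 1) * \<delta> = \<epsilon> / 2"
    unfolding \<delta>_def using \<open>\<epsilon> > 0\<close> by (auto simp: field_simps)
  have "\<forall>\<^sub>F t in at_top. dist (f t) L < \<epsilon> * \<delta> / 4"
    using lim \<delta>(1) \<open>\<epsilon> > 0\<close> by (intro tendstoD) auto
  then obtain T where T: "\<forall>t\<ge>T. dist (f t) L < \<epsilon> * \<delta> / 4"
    unfolding eventually_at_top_linorder by blast
  have "\<bar>f' t\<bar> < \<epsilon>" if t: "t \<ge> max T 0" for t
  proof -
    obtain z where z: "t < z" "z < t + \<delta>" "f (t + \<delta>) - f t = (t + \<delta> - t) * f' z"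
      by (rule deriv_halfline_MVT[OF deriv, where a=t and b="t + \<delta>"]) (use t \<delta>(1) in auto)
    have "\<bar>f (t + \<delta>) - f t\<bar> < \<epsilon> * \<delta> / 2"
      using T[rule_format, of t] T[rule_format, of "t + \<delta>"] t \<delta>(1)
      unfolding dist_real_def by linarith
    then have "\<delta> * \<bar>f' z\<bar> < \<delta> * (\<epsilon> / 2)"
      unfolding z(3) abs_mult using \<delta>(1) by simp
    then have "\<bar>f' z\<bar> < \<epsilon> / 2" using \<delta>(1) by simp
    moreover have "\<bar>f' z - f' t\<bar> \<le> \<epsilon> / 2"
    proof -
      have "\<bar>f' z - f' t\<bar> \<le> K * \<bar>z - t\<bar>" using K[rule_format, of z t] t z by simp
      also have "\<dots> \<le> (\<bar>K\<bar> + 1) * \<delta>"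
        using z by (intro mult_mono) auto
      finally show ?thesis using \<delta>(2) by simp
    qed
    ultimately show ?thesis by linarith
  qed
  then show "\<forall>\<^sub>F t in at_top. dist (f' t) 0 < \<epsilon>"
    unfolding eventually_at_top_linorder by (auto intro!: exI[of _ "max T 0"])
qed

lemma antimono_bounded_below_convergent:
  fixes f :: "real \<Rightarrow> real"
  assumes mono: "\<And>s t. 0 \<le> s \<Longrightarrow> s \<le> t \<Longrightarrow> f t \<le> f s" and below: "\<forall>t\<ge>0. B \<le> f t"
  shows "\<exists>L. (f \<longlongrightarrow> L) at_top"
proof
  have bdd: "bdd_below (f ` {0..})"
    using below by (auto intro!: bdd_belowI[of _ B])
  show "(f \<longlongrightarrow> Inf (f ` {0..})) at_top"
  proof (rule decreasing_tendsto)
    show "\<forall>\<^sub>F t in at_top. Inf (f ` {0..}) \<le> f t"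
      unfolding eventually_at_top_linorder using bdd by (auto intro!: exI[of _ 0] cInf_lower)
  next
    fix x assume "Inf (f ` {0..}) < x"
    then obtain T where "T \<ge> 0" "f T < x"
      using cInf_lessD[of "f ` {0..}" x] by auto
    then have "f t < x" if "t \<ge> T" for t
      using mono[of T t] that by linarith
    then show "\<forall>\<^sub>F t in at_top. f t < x"
      unfolding eventually_at_top_linorder by blast
  qed
qed

lemma tendsto_zero_bounded_mult:
  assumes "bounded_halfline f" "(g \<longlongrightarrow> 0) at_top"
  shows "((\<lambda>t. f t * g t) \<longlongrightarrow> 0) at_top"
proof -
  obtain B where B: "\<forall>t\<ge>0. \<bar>f t\<bar> \<le> B"
    using assms(1) unfolding bounded_halfline_def by blast
  have "norm (f t * g t) \<le> B * \<bar>g t\<bar>" if "t \<ge> 0" for t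
    using B that by (simp add: abs_mult mult_right_mono)
  then have "\<forall>\<^sub>F t in at_top. norm (f t * g t) \<le> B * \<bar>g t\<bar>"
    unfolding eventually_at_top_linorder by blast
  moreover have "((\<lambda>t. B * \<bar>g t\<bar>) \<longlongrightarrow> 0) at_top"
    using tendsto_mult_right_zero[OF tendsto_rabs_zero[OF assms(2)]] .
  ultimately show ?thesis by (rule Lim_null_comparison)
qed

lemma tendsto_zero_of_square_le:
  fixes f g :: "real \<Rightarrow> real"
  assumes "(g \<longlongrightarrow> 0) at_top" "\<forall>t\<ge>0. (f t)\<^sup>2 \<le> g t"
  shows "(f \<longlongrightarrow> 0) at_top"
proof -
  have "\<forall>\<^sub>F t in at_top. norm ((f t)\<^sup>2) \<le> g t"
    unfolding eventually_at_top_linorder using assms(2) by auto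
  then have "((\<lambda>t. (f t)\<^sup>2) \<longlongrightarrow> 0) at_top"
    by (rule Lim_null_comparison[OF _ assms(1)])
  then have "((\<lambda>t. sqrt ((f t)\<^sup>2)) \<longlongrightarrow> sqrt 0) at_top"
    by (intro tendsto_intros)
  then show ?thesis by (simp add: tendsto_rabs_zero_iff)
qed

section \<open>Disagreement on an undirected graph with pinned nodes\<close>

locale finite_undirected_graph =
  fixes nodes :: "nat set" and nbrs :: "nat \<Rightarrow> nat set"
  assumes finite_nodes: "finite nodes"
    and nbrs_subset: "\<And>i. i \<in> nodes \<Longrightarrow> nbrs i \<subseteq> nodes"
    and nbrs_sym: "\<And>i j. i \<in> nodes \<Longrightarrow> j \<in> nodes \<Longrightarrow> j \<in> nbrs i \<longleftrightarrow> i \<in> nbrs j"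
begin

lemma finite_nbrs: "i \<in> nodes \<Longrightarrow> finite (nbrs i)"
  using finite_nodes nbrs_subset finite_subset by blast

lemma sum_edges_swap: "(\<Sum>i\<in>nodes. \<Sum>j\<in>nbrs i. F i j) = (\<Sum>i\<in>nodes. \<Sum>j\<in>nbrs i. F j i)"
proof -
  have "(\<Sum>i\<in>nodes. \<Sum>j\<in>nbrs i. F i j) = (\<Sum>i\<in>nodes. \<Sum>j\<in>nodes. if j \<in> nbrs i then F i j else 0)"
    by (intro sum.cong refl sum.mono_neutral_cong_left) (use finite_nodes nbrs_subset in auto)
  also have "\<dots> = (\<Sum>j\<in>nodes. \<Sum>i\<in>nodes. if j \<in> nbrs i then F i j else 0)"
    by (rule sum.swap)
  also have "\<dots> = (\<Sum>j\<in>nodes. \<Sum>i\<in>nodes. if i \<in> nbrs j then F i j else 0)"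
    by (intro sum.cong refl) (use nbrs_sym in auto)
  also have "\<dots> = (\<Sum>j\<in>nodes. \<Sum>i\<in>nbrs j. F i j)"
    by (intro sum.cong refl sum.mono_neutral_cong_right) (use finite_nodes nbrs_subset in auto)
  finally show ?thesis .
qed

text \<open>\<open>local_error pinned p = -(L + B) p\<close>, with \<open>L\<close> the graph Laplacian and \<open>B\<close> the
  diagonal matrix of the pinned nodes: these also see a reference node whose value is 0.\<close>

definition local_error :: "(nat \<Rightarrow> bool) \<Rightarrow> (nat \<Rightarrow> real) \<Rightarrow> nat \<Rightarrow> real" where
  "local_error pinned p i = (\<Sum>j\<in>nbrs i. p j - p i) - (if pinned i then p i else 0)"

definition disagreement :: "(nat \<Rightarrow> bool) \<Rightarrow> (nat \<Rightarrow> real) \<Rightarrow> real" where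
  "disagreement pinned p =
     (1/2) * (\<Sum>i\<in>nodes. \<Sum>j\<in>nbrs i. (p i - p j)\<^sup>2) + (\<Sum>i\<in>nodes. if pinned i then (p i)\<^sup>2 else 0)"

lemma sum_mult_local_error:
  "(\<Sum>i\<in>nodes. q i * local_error pinned p i) =
     - ((1/2) * (\<Sum>i\<in>nodes. \<Sum>j\<in>nbrs i. (p i - p j) * (q i - q j))
        + (\<Sum>i\<in>nodes. if pinned i then p i * q i else 0))"
proof -
  let ?A = "\<Sum>i\<in>nodes. \<Sum>j\<in>nbrs i. q i * (p j - p i)"
  have "q i * local_error pinned p i
      = (\<Sum>j\<in>nbrs i. q i * (p j - p i)) - (if pinned i then p i * q i else 0)" for i
    unfolding local_error_def right_diff_distrib[of "q i"] sum_distrib_left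
    by (cases "pinned i") (simp_all add: mult.commute)
  then have "(\<Sum>i\<in>nodes. q i * local_error pinned p i)
      = ?A - (\<Sum>i\<in>nodes. if pinned i then p i * q i else 0)"
    by (simp only: sum_subtractf)
  moreover have "(\<Sum>i\<in>nodes. \<Sum>j\<in>nbrs i. (p i - p j) * (q i - q j))
      = - ?A - (\<Sum>i\<in>nodes. \<Sum>j\<in>nbrs i. q j * (p i - p j))"
    by (simp add: sum_negf[symmetric] sum_subtractf[symmetric] algebra_simps)
  moreover have "?A = (\<Sum>i\<in>nodes. \<Sum>j\<in>nbrs i. q j * (p i - p j))"
    by (rule sum_edges_swap)
  ultimately show ?thesis by linarith
qed

lemma sum_mult_local_error_commute:
  "(\<Sum>i\<in>nodes. q i * local_error pinned p i) = (\<Sum>i\<in>nodes. p i * local_error pinned q i)"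
  unfolding sum_mult_local_error by (simp add: mult.commute cong: if_cong)

lemma sum_mult_local_error_self:
  "(\<Sum>i\<in>nodes. p i * local_error pinned p i) = - disagreement pinned p"
  unfolding sum_mult_local_error disagreement_def by (simp add: power2_eq_square cong: if_cong)

lemma disagreement_nonneg: "0 \<le> disagreement pinned p"
  unfolding disagreement_def by (intro add_nonneg_nonneg mult_nonneg_nonneg sum_nonneg) auto

lemma edge_le_disagreement:
  assumes "i \<in> nodes" "j \<in> nbrs i"
  shows "(1/2) * (p i - p j)\<^sup>2 \<le> disagreement pinned p"
proof -
  have "(p i - p j)\<^sup>2 \<le> (\<Sum>j\<in>nbrs i. (p i - p j)\<^sup>2)"
    by (rule member_le_sum) (use assms finite_nbrs in auto)
  also have "\<dots> \<le> (\<Sum>i\<in>nodes. \<Sum>j\<in>nbrs i. (p i - p j)\<^sup>2)"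
    by (rule member_le_sum[of i nodes "\<lambda>i. \<Sum>j\<in>nbrs i. (p i - p j)\<^sup>2"])
      (use assms finite_nodes in \<open>auto intro!: sum_nonneg\<close>)
  finally have "(1/2) * (p i - p j)\<^sup>2 \<le> (1/2) * (\<Sum>i\<in>nodes. \<Sum>j\<in>nbrs i. (p i - p j)\<^sup>2)"
    by simp
  moreover have "0 \<le> (\<Sum>i\<in>nodes. if pinned i then (p i)\<^sup>2 else 0)"
    by (rule sum_nonneg) auto
  ultimately show ?thesis unfolding disagreement_def by linarith
qed

lemma pinned_le_disagreement:
  assumes "i \<in> nodes" "pinned i"
  shows "(p i)\<^sup>2 \<le> disagreement pinned p"
proof -
  have "(p i)\<^sup>2 \<le> (\<Sum>i\<in>nodes. if pinned i then (p i)\<^sup>2 else 0)"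
    using member_le_sum[of i nodes "\<lambda>i. if pinned i then (p i)\<^sup>2 else 0"] assms finite_nodes
    by auto
  moreover have "0 \<le> (\<Sum>i\<in>nodes. \<Sum>j\<in>nbrs i. (p i - p j)\<^sup>2)"
    by (intro sum_nonneg) auto
  ultimately show ?thesis unfolding disagreement_def by linarith
qed

lemma bounded_halfline_local_error:
  assumes "i \<in> nodes" "\<And>j. j \<in> nodes \<Longrightarrow> bounded_halfline (\<lambda>t. p t j)"
  shows "bounded_halfline (\<lambda>t. local_error pinned (p t) i)"
proof -
  have "bounded_halfline (\<lambda>t. \<Sum>j\<in>nbrs i. p t j - p t i)"
    using assms nbrs_subset by (intro bounded_halfline_sum bounded_halfline_diff finite_nbrs) auto
  then show ?thesis
    unfolding local_error_def using assms by (cases "pinned i") (auto intro: bounded_halfline_diff)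
qed

lemma bounded_lipschitz_halfline_local_error:
  assumes "i \<in> nodes" "\<And>j. j \<in> nodes \<Longrightarrow> bounded_lipschitz_halfline (\<lambda>t. p t j)"
  shows "bounded_lipschitz_halfline (\<lambda>t. local_error pinned (p t) i)"
proof -
  have "bounded_lipschitz_halfline (\<lambda>t. \<Sum>j\<in>nbrs i. p t j - p t i)"
    using assms nbrs_subset
    by (intro bounded_lipschitz_halfline_sum bounded_lipschitz_halfline_diff finite_nbrs) auto
  then show ?thesis
    unfolding local_error_def using assms
    by (cases "pinned i") (auto intro: bounded_lipschitz_halfline_diff)
qed

lemma has_real_derivative_disagreement:
  assumes "\<And>i. i \<in> nodes \<Longrightarrow> ((\<lambda>s. p s i) has_real_derivative p' i) (at t within S)"
  shows "((\<lambda>s. disagreement pinned (p s)) has_real_derivative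
           -2 * (\<Sum>i\<in>nodes. p' i * local_error pinned (p t) i)) (at t within S)"
proof -
  have edges: "((\<lambda>s. \<Sum>i\<in>nodes. \<Sum>j\<in>nbrs i. (p s i - p s j)\<^sup>2) has_real_derivative
      (\<Sum>i\<in>nodes. \<Sum>j\<in>nbrs i. 2 * ((p t i - p t j) * (p' i - p' j)))) (at t within S)"
  proof (intro DERIV_sum)
    fix i j assume "i \<in> nodes" "j \<in> nbrs i"
    then show "((\<lambda>s. (p s i - p s j)\<^sup>2) has_real_derivative 2 * ((p t i - p t j) * (p' i - p' j)))
        (at t within S)"
      using assms[of i] assms[of j] nbrs_subset by (auto intro!: derivative_eq_intros)
  qed
  have pins: "((\<lambda>s. \<Sum>i\<in>nodes. if pinned i then (p s i)\<^sup>2 else 0) has_real_derivative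
      (\<Sum>i\<in>nodes. 2 * (if pinned i then p t i * p' i else 0))) (at t within S)"
  proof (intro DERIV_sum)
    fix i assume "i \<in> nodes"
    then show "((\<lambda>s. if pinned i then (p s i)\<^sup>2 else 0) has_real_derivative
        2 * (if pinned i then p t i * p' i else 0)) (at t within S)"
      using assms[of i] by (cases "pinned i") (auto intro!: derivative_eq_intros)
  qed
  have "(1/2) * (\<Sum>i\<in>nodes. \<Sum>j\<in>nbrs i. 2 * ((p t i - p t j) * (p' i - p' j)))
      + (\<Sum>i\<in>nodes. 2 * (if pinned i then p t i * p' i else 0))
      = -2 * (\<Sum>i\<in>nodes. p' i * local_error pinned (p t) i)"
    unfolding sum_mult_local_error by (simp only: sum_distrib_left[symmetric]) (simp add: field_simps)
  then show ?thesis
    unfolding disagreement_def using DERIV_add[OF DERIV_cmult[OF edges, of "1/2"] pins] by simp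
qed

end

section \<open>Block structure of \<open>Smat\<close> and \<open>phim\<close>\<close>

lemma nat_double_half:
  fixes x :: nat
  shows "x mod 2 = 0 \<Longrightarrow> 2 * (x div 2) = x" "x mod 2 = Suc 0 \<Longrightarrow> Suc (2 * (x div 2)) = x"
  by presburger+

lemma mulv_Smat_even:
  assumes "k < l"
  shows "mulv (2*l) (Smat z) y (2*k) = z k * y (2*k+1)"
proof -
  have "mulv (2*l) (Smat z) y (2*k) = (\<Sum>j<2*l. if j = 2*k+1 then z k * y j else 0)"
    unfolding mulv_def Smat_def kron_def diagm_def amat_def
    by (rule sum.cong) (auto simp: nat_double_half)
  also have "\<dots> = z k * y (2*k+1)" using assms by (simp add: sum.delta)
  finally show ?thesis .
qed

lemma mulv_Smat_odd:
  assumes "k < l"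
  shows "mulv (2*l) (Smat z) y (2*k+1) = - z k * y (2*k)"
proof -
  have "mulv (2*l) (Smat z) y (2*k+1) = (\<Sum>j<2*l. if j = 2*k then - z k * y j else 0)"
    unfolding mulv_def Smat_def kron_def diagm_def amat_def
    by (rule sum.cong) (auto simp: nat_double_half)
  also have "\<dots> = - z k * y (2*k)" using assms by (simp add: sum.delta)
  finally show ?thesis .
qed

lemma mulv_phim:
  assumes "k < l"
  shows "mulv (2*l) (phim x) y k = x (2*k) * y (2*k+1) - x (2*k+1) * y (2*k)"
proof -
  have "mulv (2*l) (phim x) y k = (\<Sum>j<2*l. (if j = 2*k then - x (2*k+1) * y j else 0)
          + (if j = 2*k+1 then x (2*k) * y j else 0))"
    unfolding mulv_def phim_def by (rule sum.cong) (auto simp: nat_double_half)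
  also have "\<dots> = x (2*k) * y (2*k+1) - x (2*k+1) * y (2*k)"
    using assms by (simp add: sum.distrib sum.delta)
  finally show ?thesis .
qed

lemma sum_lessThan_pairs: "(\<Sum>c<2*(l::nat). f c) = (\<Sum>k<l. f (2*k) + f (2*k+1))"
  by (induction l) (auto simp: sum.distrib algebra_simps)

section \<open>Integrals of products of harmonics\<close>

definition cos_integral :: "real \<Rightarrow> real \<Rightarrow> real \<Rightarrow> real" where
  "cos_integral \<nu> t T = (if \<nu> = 0 then T else (sin (\<nu> * (t + T)) - sin (\<nu> * t)) / \<nu>)"

definition sin_integral :: "real \<Rightarrow> real \<Rightarrow> real \<Rightarrow> real" where
  "sin_integral \<nu> t T = (if \<nu> = 0 then 0 else (cos (\<nu> * t) - cos (\<nu> * (t + T))) / \<nu>)"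

lemma has_integral_cos_mult:
  assumes "T \<ge> 0"
  shows "((\<lambda>s. cos (\<nu> * s)) has_integral cos_integral \<nu> t T) {t..t+T}"
proof (cases "\<nu> = 0")
  case True
  then show ?thesis
    unfolding cos_integral_def using has_integral_const_real[of "1::real" t "t + T"] assms
    by (simp add: real_scaleR_def)
next
  case False
  have "((\<lambda>s. cos (\<nu> * s)) has_integral sin (\<nu> * (t + T)) / \<nu> - sin (\<nu> * t) / \<nu>) {t..t+T}"
    by (rule fundamental_theorem_of_calculus[where f="\<lambda>s. sin (\<nu> * s) / \<nu>", simplified])
      (use assms False in
        \<open>auto intro!: derivative_eq_intros simp: has_real_derivative_iff_has_vector_derivative[symmetric]\<close>)
  then show ?thesis unfolding cos_integral_def using False by (simp add: diff_divide_distrib)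
qed

lemma has_integral_sin_mult:
  assumes "T \<ge> 0"
  shows "((\<lambda>s. sin (\<nu> * s)) has_integral sin_integral \<nu> t T) {t..t+T}"
proof (cases "\<nu> = 0")
  case True
  then show ?thesis unfolding sin_integral_def by simp
next
  case False
  have "((\<lambda>s. sin (\<nu> * s)) has_integral
      (\<lambda>s. - cos (\<nu> * s) / \<nu>) (t + T) - (\<lambda>s. - cos (\<nu> * s) / \<nu>) t) {t..t+T}"
    by (rule fundamental_theorem_of_calculus)
      (use assms False in
        \<open>auto intro!: derivative_eq_intros simp: has_real_derivative_iff_has_vector_derivative[symmetric]\<close>)
  then show ?thesis unfolding sin_integral_def using False by (simp add: diff_divide_distrib)
qed

lemma cos_integral_term_ge:
  assumes "\<bar>c\<bar> \<le> M" "\<gamma> > 0" "\<gamma> \<le> \<bar>\<nu>\<bar>"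
  shows "- (M * (2 / \<gamma>)) \<le> c * cos_integral \<nu> t T"
proof -
  have "\<bar>sin (\<nu> * (t + T)) - sin (\<nu> * t)\<bar> \<le> 2"
    using abs_sin_le_one[of "\<nu> * (t + T)"] abs_sin_le_one[of "\<nu> * t"] by linarith
  then have "\<bar>cos_integral \<nu> t T\<bar> \<le> 2 / \<bar>\<nu>\<bar>"
    unfolding cos_integral_def using assms by (auto simp: divide_right_mono)
  also have "\<dots> \<le> 2 / \<gamma>" using assms by (intro divide_left_mono) auto
  finally have "\<bar>c\<bar> * \<bar>cos_integral \<nu> t T\<bar> \<le> M * (2 / \<gamma>)"
    using assms(1) by (intro mult_mono) (auto intro: order.trans[OF abs_ge_zero])
  then show ?thesis unfolding abs_mult[symmetric] by linarith
qed

lemma sin_integral_term_ge: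
  assumes "\<bar>c\<bar> \<le> M" "\<gamma> > 0" "\<gamma> \<le> \<bar>\<nu>\<bar>"
  shows "- (M * (2 / \<gamma>)) \<le> c * sin_integral \<nu> t T"
proof -
  have "\<bar>cos (\<nu> * t) - cos (\<nu> * (t + T))\<bar> \<le> 2"
    using abs_cos_le_one[of "\<nu> * (t + T)"] abs_cos_le_one[of "\<nu> * t"] by linarith
  then have "\<bar>sin_integral \<nu> t T\<bar> \<le> 2 / \<bar>\<nu>\<bar>"
    unfolding sin_integral_def using assms by (auto simp: divide_right_mono)
  also have "\<dots> \<le> 2 / \<gamma>" using assms by (intro divide_left_mono) auto
  finally have "\<bar>c\<bar> * \<bar>sin_integral \<nu> t T\<bar> \<le> M * (2 / \<gamma>)"
    using assms(1) by (intro mult_mono) (auto intro: order.trans[OF abs_ge_zero])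
  then show ?thesis unfolding abs_mult[symmetric] by linarith
qed

lemma harmonic_product_eq:
  fixes a b pa pb qa qb s :: real
  shows "(pa * cos (a * s) + pb * sin (a * s)) * (qa * cos (b * s) + qb * sin (b * s))
    = 1/2 * ((pa*qa + pb*qb) * cos ((a - b) * s) + (pa*qa - pb*qb) * cos ((a + b) * s)
           + (pa*qb + pb*qa) * sin ((a + b) * s) + (pb*qa - pa*qb) * sin ((a - b) * s))"
  by (simp add: left_diff_distrib distrib_right cos_diff cos_add sin_add sin_diff algebra_simps)

lemma harmonic_coefficients_le:
  fixes pa pb qa qb :: real
  shows "\<bar>pa*qa + pb*qb\<bar> \<le> (\<bar>pa\<bar> + \<bar>pb\<bar>) * (\<bar>qa\<bar> + \<bar>qb\<bar>)"
    "\<bar>pa*qa - pb*qb\<bar> \<le> (\<bar>pa\<bar> + \<bar>pb\<bar>) * (\<bar>qa\<bar> + \<bar>qb\<bar>)"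
    "\<bar>pa*qb + pb*qa\<bar> \<le> (\<bar>pa\<bar> + \<bar>pb\<bar>) * (\<bar>qa\<bar> + \<bar>qb\<bar>)"
    "\<bar>pb*qa - pa*qb\<bar> \<le> (\<bar>pa\<bar> + \<bar>pb\<bar>) * (\<bar>qa\<bar> + \<bar>qb\<bar>)"
proof -
  have M: "(\<bar>pa\<bar> + \<bar>pb\<bar>) * (\<bar>qa\<bar> + \<bar>qb\<bar>) = \<bar>pa*qa\<bar> + \<bar>pa*qb\<bar> + \<bar>pb*qa\<bar> + \<bar>pb*qb\<bar>"
    by (simp add: abs_mult algebra_simps)
  have "0 \<le> \<bar>pa*qb\<bar>" "0 \<le> \<bar>pb*qa\<bar>" "0 \<le> \<bar>pa*qa\<bar>" "0 \<le> \<bar>pb*qb\<bar>" by auto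
  then show "\<bar>pa*qa + pb*qb\<bar> \<le> (\<bar>pa\<bar> + \<bar>pb\<bar>) * (\<bar>qa\<bar> + \<bar>qb\<bar>)"
    "\<bar>pa*qa - pb*qb\<bar> \<le> (\<bar>pa\<bar> + \<bar>pb\<bar>) * (\<bar>qa\<bar> + \<bar>qb\<bar>)"
    "\<bar>pa*qb + pb*qa\<bar> \<le> (\<bar>pa\<bar> + \<bar>pb\<bar>) * (\<bar>qa\<bar> + \<bar>qb\<bar>)"
    "\<bar>pb*qa - pa*qb\<bar> \<le> (\<bar>pa\<bar> + \<bar>pb\<bar>) * (\<bar>qa\<bar> + \<bar>qb\<bar>)"
    unfolding M
    using abs_triangle_ineq[of "pa*qa" "pb*qb"] abs_triangle_ineq4[of "pa*qa" "pb*qb"]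
      abs_triangle_ineq[of "pa*qb" "pb*qa"] abs_triangle_ineq4[of "pb*qa" "pa*qb"]
    by linarith+
qed

lemma has_integral_harmonic_product:
  fixes a b pa pb qa qb :: real
  assumes \<gamma>: "\<gamma> > 0" and T: "T \<ge> 0" and sum: "\<gamma> \<le> \<bar>a + b\<bar>" and diff: "a = b \<or> \<gamma> \<le> \<bar>a - b\<bar>"
  obtains X where
    "((\<lambda>s. (pa * cos (a * s) + pb * sin (a * s)) * (qa * cos (b * s) + qb * sin (b * s)))
        has_integral X) {t..t+T}"
    "(if a = b then T/2 * (pa*qa + pb*qb) else 0)
        - 4 * ((\<bar>pa\<bar> + \<bar>pb\<bar>) * (\<bar>qa\<bar> + \<bar>qb\<bar>)) / \<gamma> \<le> X"
proof -
  define M where "M = (\<bar>pa\<bar> + \<bar>pb\<bar>) * (\<bar>qa\<bar> + \<bar>qb\<bar>)"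
  define Z where "Z = M * (2 / \<gamma>)"
  define X1 where "X1 = (pa*qa + pb*qb) * cos_integral (a - b) t T"
  define X2 where "X2 = (pa*qa - pb*qb) * cos_integral (a + b) t T"
  define X3 where "X3 = (pa*qb + pb*qa) * sin_integral (a + b) t T"
  define X4 where "X4 = (pb*qa - pa*qb) * sin_integral (a - b) t T"
  note coef = harmonic_coefficients_le[where pa=pa and pb=pb and qa=qa and qb=qb, folded M_def]
  have int: "((\<lambda>s. (pa * cos (a * s) + pb * sin (a * s)) * (qa * cos (b * s) + qb * sin (b * s)))
      has_integral 1/2 * (X1 + X2 + X3 + X4)) {t..t+T}"
    unfolding harmonic_product_eq X1_def X2_def X3_def X4_def
    by (intro has_integral_mult_right has_integral_add has_integral_cos_mult has_integral_sin_mult T)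
  have X23: "- Z \<le> X2" "- Z \<le> X3"
    unfolding X2_def X3_def Z_def by (intro cos_integral_term_ge sin_integral_term_ge coef \<gamma> sum)+
  have Z: "0 \<le> Z" "4 * M / \<gamma> = 2 * Z"
    unfolding Z_def M_def using \<gamma> by auto
  show ?thesis
  proof (cases "a = b")
    case True
    define R where "R = T/2 * (pa*qa + pb*qb)"
    have "1/2 * X1 = R" "X4 = 0"
      unfolding X1_def X4_def R_def cos_integral_def sin_integral_def using True by simp_all
    then have ineq: "R - 2 * Z \<le> 1/2 * (X1 + X2 + X3 + X4)"
      using X23 Z(1) unfolding distrib_left by linarith
    show ?thesis by (rule that[OF int]) (use ineq True Z(2) in \<open>simp add: R_def M_def\<close>)
  next
    case False
    then have gap: "\<gamma> \<le> \<bar>a - b\<bar>" using diff by simp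
    have "- Z \<le> X1" "- Z \<le> X4"
      unfolding X1_def X4_def Z_def by (intro cos_integral_term_ge sin_integral_term_ge coef \<gamma> gap)+
    then have ineq: "0 - 2 * Z \<le> 1/2 * (X1 + X2 + X3 + X4)"
      using X23 Z(1) unfolding distrib_left by linarith
    show ?thesis by (rule that[OF int]) (use ineq False Z(2) in \<open>simp add: M_def\<close>)
  qed
qed

lemma square_sum_abs_le:
  fixes \<alpha> \<beta> :: "nat \<Rightarrow> real"
  shows "(\<Sum>k<n. \<bar>\<alpha> k\<bar> + \<bar>\<beta> k\<bar>)\<^sup>2 \<le> 2 * real n * (\<Sum>k<n. (\<alpha> k)\<^sup>2 + (\<beta> k)\<^sup>2)"
proof -
  have sq: "(\<bar>\<alpha> k\<bar> + \<bar>\<beta> k\<bar>)\<^sup>2 \<le> 2 * ((\<alpha> k)\<^sup>2 + (\<beta> k)\<^sup>2)" for k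
  proof -
    have "0 \<le> (\<bar>\<alpha> k\<bar> - \<bar>\<beta> k\<bar>)\<^sup>2" by simp
    then show ?thesis by (simp add: power2_eq_square algebra_simps abs_mult_self_eq)
  qed
  have "(\<Sum>k<n. \<bar>\<alpha> k\<bar> + \<bar>\<beta> k\<bar>)\<^sup>2 \<le> (\<Sum>k<n. (\<bar>\<alpha> k\<bar> + \<bar>\<beta> k\<bar>)\<^sup>2) * n"
    using sum_squared_le_sum_of_squares[of "\<lambda>k. \<bar>\<alpha> k\<bar> + \<bar>\<beta> k\<bar>" "{..<n}"] by simp
  also have "\<dots> \<le> (\<Sum>k<n. 2 * ((\<alpha> k)\<^sup>2 + (\<beta> k)\<^sup>2)) * n"
    using sq by (intro mult_right_mono sum_mono) auto
  also have "\<dots> = 2 * real n * (\<Sum>k<n. (\<alpha> k)\<^sup>2 + (\<beta> k)\<^sup>2)"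
    by (simp only: sum_distrib_left[symmetric] mult_ac)
  finally show ?thesis .
qed

lemma integral_square_harmonic_sum_ge:
  fixes \<omega> \<alpha> \<beta> :: "nat \<Rightarrow> real"
  assumes \<gamma>: "\<gamma> > 0" and T: "T \<ge> 0" and pos: "\<forall>k<n. \<gamma> \<le> \<omega> k"
    and gap: "\<forall>k<n. \<forall>j<n. k \<noteq> j \<longrightarrow> \<gamma> \<le> \<bar>\<omega> k - \<omega> j\<bar>"
  shows "(T/2 - 8 * real n / \<gamma>) * (\<Sum>k<n. (\<alpha> k)\<^sup>2 + (\<beta> k)\<^sup>2)
    \<le> integral {t..t+T} (\<lambda>s. (\<Sum>k<n. \<alpha> k * cos (\<omega> k * s) + \<beta> k * sin (\<omega> k * s))\<^sup>2)"
proof -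
  define h where "h k s = \<alpha> k * cos (\<omega> k * s) + \<beta> k * sin (\<omega> k * s)" for k s
  define m where "m k = \<bar>\<alpha> k\<bar> + \<bar>\<beta> k\<bar>" for k
  define lower where "lower k j = (if k = j then T/2 * ((\<alpha> k)\<^sup>2 + (\<beta> k)\<^sup>2) else 0) - 4 * (m k * m j) / \<gamma>"
    for k j
  have "\<exists>X. ((\<lambda>s. h k s * h j s) has_integral X) {t..t+T} \<and> lower k j \<le> X"
    if "k < n" "j < n" for k j
  proof -
    have "\<gamma> \<le> \<omega> k" "\<gamma> \<le> \<omega> j" using pos that by auto
    then have sum: "\<gamma> \<le> \<bar>\<omega> k + \<omega> j\<bar>" using \<gamma> by (auto simp: abs_if)
    have resonant: "\<omega> k = \<omega> j \<longleftrightarrow> k = j" using gap that \<gamma> by force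
    have diff: "\<omega> k = \<omega> j \<or> \<gamma> \<le> \<bar>\<omega> k - \<omega> j\<bar>" using gap that by blast
    obtain X where "((\<lambda>s. h k s * h j s) has_integral X) {t..t+T}"
      "(if \<omega> k = \<omega> j then T/2 * (\<alpha> k * \<alpha> j + \<beta> k * \<beta> j) else 0)
        - 4 * ((\<bar>\<alpha> k\<bar> + \<bar>\<beta> k\<bar>) * (\<bar>\<alpha> j\<bar> + \<bar>\<beta> j\<bar>)) / \<gamma> \<le> X"
      unfolding h_def by (rule has_integral_harmonic_product[OF \<gamma> T sum diff])
    then show ?thesis
      unfolding lower_def m_def resonant by (intro exI[of _ X]) (auto simp: power2_eq_square)
  qed
  then obtain X where X: "\<And>k j. k < n \<Longrightarrow> j < n \<Longrightarrow>
      ((\<lambda>s. h k s * h j s) has_integral X k j) {t..t+T} \<and> lower k j \<le> X k j"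
    by metis
  have "4 / \<gamma> * (\<Sum>k<n. m k)\<^sup>2
      \<le> 4 / \<gamma> * (2 * real n * (\<Sum>k<n. (\<alpha> k)\<^sup>2 + (\<beta> k)\<^sup>2))"
    unfolding m_def using \<gamma> by (intro mult_left_mono square_sum_abs_le) auto
  also have "\<dots> = 8 * real n / \<gamma> * (\<Sum>k<n. (\<alpha> k)\<^sup>2 + (\<beta> k)\<^sup>2)"
    by simp
  finally have m_sum: "4 / \<gamma> * (\<Sum>k<n. m k)\<^sup>2
      \<le> 8 * real n / \<gamma> * (\<Sum>k<n. (\<alpha> k)\<^sup>2 + (\<beta> k)\<^sup>2)" .
  have "(T/2 - 8 * real n / \<gamma>) * (\<Sum>k<n. (\<alpha> k)\<^sup>2 + (\<beta> k)\<^sup>2)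
      \<le> T/2 * (\<Sum>k<n. (\<alpha> k)\<^sup>2 + (\<beta> k)\<^sup>2) - 4 / \<gamma> * (\<Sum>k<n. m k)\<^sup>2"
    using m_sum by (simp add: left_diff_distrib)
  also have "\<dots> = (\<Sum>k<n. \<Sum>j<n. lower k j)"
    unfolding lower_def power2_eq_square[of "sum m {..<n}"] sum_product
    by (simp add: sum_subtractf sum_distrib_left sum_divide_distrib)
  also have "\<dots> \<le> (\<Sum>k<n. \<Sum>j<n. X k j)"
    using X by (intro sum_mono) auto
  also have "\<dots> = integral {t..t+T} (\<lambda>s. (\<Sum>k<n. h k s)\<^sup>2)"
    unfolding power2_eq_square sum_product using X
    by (intro integral_unique[symmetric] has_integral_sum) auto
  finally show ?thesis unfolding h_def .
qed

section \<open>Persistent excitation of the leader\<close>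

lemma finite_positive_lower_bound:
  fixes f :: "'a \<Rightarrow> real"
  assumes "finite S" "\<forall>x\<in>S. 0 < f x"
  obtains \<rho> where "\<rho> > 0" "\<forall>x\<in>S. \<rho> \<le> f x"
proof
  show "Min (insert 1 (f ` S)) > 0" using assms by simp
  show "\<forall>x\<in>S. Min (insert 1 (f ` S)) \<le> f x" using assms by simp
qed

lemma frequency_gap:
  fixes \<omega> :: "nat \<Rightarrow> real"
  assumes "\<forall>k<n. \<omega> k > 0" "\<forall>k<n. \<forall>j<n. k \<noteq> j \<longrightarrow> \<omega> k \<noteq> \<omega> j"
  obtains \<gamma> where "\<gamma> > 0" "\<forall>k<n. \<gamma> \<le> \<omega> k" "\<forall>k<n. \<forall>j<n. k \<noteq> j \<longrightarrow> \<gamma> \<le> \<bar>\<omega> k - \<omega> j\<bar>"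
proof -
  define gap where "gap = (\<lambda>(k, j). if k = j then \<omega> k else \<bar>\<omega> k - \<omega> j\<bar>)"
  have "finite ({..<n} \<times> {..<n})" by simp
  moreover have "\<forall>x\<in>{..<n} \<times> {..<n}. 0 < gap x" using assms unfolding gap_def by auto
  ultimately obtain \<gamma> where \<gamma>: "\<gamma> > 0" "\<forall>x\<in>{..<n} \<times> {..<n}. \<gamma> \<le> gap x"
    by (rule finite_positive_lower_bound)
  have bound: "\<gamma> \<le> (if k = j then \<omega> k else \<bar>\<omega> k - \<omega> j\<bar>)" if "k < n" "j < n" for k j
    using bspec[OF \<gamma>(2), of "(k, j)"] that unfolding gap_def by simp
  show ?thesis
  proof (rule that)
    show "\<forall>k<n. \<gamma> \<le> \<omega> k"
    proof (intro allI impI)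
      fix k assume "k < n"
      then show "\<gamma> \<le> \<omega> k" using bound[of k k] by simp
    qed
    show "\<forall>k<n. \<forall>j<n. k \<noteq> j \<longrightarrow> \<gamma> \<le> \<bar>\<omega> k - \<omega> j\<bar>"
    proof (intro allI impI)
      fix k j assume "k < n" "j < n" "k \<noteq> j"
      then show "\<gamma> \<le> \<bar>\<omega> k - \<omega> j\<bar>" using bound[of k j] by simp
    qed
  qed (fact \<gamma>(1))
qed

lemma quadratic_form_integral:
  fixes F :: "real \<Rightarrow> nat \<Rightarrow> real"
  assumes cont: "\<forall>i<n. continuous_on {t..t+T} (\<lambda>s. F s i)"
  shows "(\<Sum>i<n. \<Sum>j<n. x i * (c * integral {t..t+T} (\<lambda>s. F s i * F s j)
              - (if i = j then \<epsilon> else 0)) * x j)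
    = c * integral {t..t+T} (\<lambda>s. (\<Sum>i<n. x i * F s i)\<^sup>2) - \<epsilon> * (\<Sum>i<n. (x i)\<^sup>2)"
proof -
  have "(\<lambda>s. F s i * F s j) integrable_on {t..t+T}" if "i < n" "j < n" for i j
    using cont that by (intro integrable_continuous_interval continuous_intros) auto
  then have "((\<lambda>s. \<Sum>i<n. \<Sum>j<n. x i * x j * (F s i * F s j)) has_integral
      (\<Sum>i<n. \<Sum>j<n. x i * x j * integral {t..t+T} (\<lambda>s. F s i * F s j))) {t..t+T}"
    by (intro has_integral_sum has_integral_mult_right integrable_integral) auto
  moreover have "(\<Sum>i<n. x i * F s i)\<^sup>2 = (\<Sum>i<n. \<Sum>j<n. x i * x j * (F s i * F s j))" for s
    unfolding power2_eq_square sum_product by (simp add: algebra_simps)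
  ultimately have "integral {t..t+T} (\<lambda>s. (\<Sum>i<n. x i * F s i)\<^sup>2)
      = (\<Sum>i<n. \<Sum>j<n. x i * x j * integral {t..t+T} (\<lambda>s. F s i * F s j))"
    by (simp add: integral_unique)
  moreover have "(\<Sum>j<n. x i * (c * Y j - (if i = j then \<epsilon> else 0)) * x j)
      = c * (\<Sum>j<n. x i * x j * Y j) - \<epsilon> * (x i)\<^sup>2" if "i < n" for i and Y :: "nat \<Rightarrow> real"
  proof -
    have "(\<Sum>j<n. x i * (c * Y j - (if i = j then \<epsilon> else 0)) * x j)
        = (\<Sum>j<n. c * (x i * x j * Y j)) - (\<Sum>j<n. if i = j then \<epsilon> * (x i * x j) else 0)"
      unfolding sum_subtractf[symmetric] by (rule sum.cong) (auto simp: algebra_simps)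
    then show ?thesis using that by (simp add: sum_distrib_left power2_eq_square)
  qed
  ultimately show ?thesis by (simp add: sum_subtractf sum_distrib_left)
qed

lemma PE_I:
  assumes "\<exists>B. \<forall>t\<ge>0. \<forall>k<n. \<bar>f t k\<bar> \<le> B" "\<epsilon> > 0" "T > 0"
    and "\<And>t x. t \<ge> 0 \<Longrightarrow> 0 \<le> (\<Sum>i<n. \<Sum>j<n. x i * ((1/T) * integral {t..t+T} (\<lambda>s. f s i * f s j)
              - (if i = j then \<epsilon> else 0)) * x j)"
  shows "PE n f"
  unfolding PE_def using assms by blast

locale harmonic_leader =
  fixes l :: nat and \<omega>0 :: rvec and v :: "real \<Rightarrow> rvec"
  assumes leader: "\<forall>t\<ge>0. \<forall>k<2*l.
      ((\<lambda>s. v s k) has_real_derivative mulv (2*l) (Smat \<omega>0) (v t) k) (at t within {0..})"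
    and v_init: "\<forall>k<l. v 0 (2*k) \<noteq> 0 \<or> v 0 (2*k+1) \<noteq> 0"
begin

definition vp :: "nat \<Rightarrow> real \<Rightarrow> real" where "vp k t = v t (2*k)"
definition vq :: "nat \<Rightarrow> real \<Rightarrow> real" where "vq k t = v t (2*k+1)"
definition amp_sq :: "nat \<Rightarrow> real" where "amp_sq k = (vp k 0)\<^sup>2 + (vq k 0)\<^sup>2"

lemma deriv_vp:
  assumes "k < l"
  shows "deriv_halfline (vp k) (\<lambda>t. \<omega>0 k * vq k t)"
  unfolding deriv_halfline_def vp_def vq_def
proof (intro allI impI)
  fix t :: real assume "t \<ge> 0"
  then show "((\<lambda>t. v t (2*k)) has_real_derivative \<omega>0 k * v t (2*k+1)) (at t within {0..})"
    using leader[rule_format, of t "2*k"] mulv_Smat_even[OF assms] assms by simp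
qed

lemma deriv_vq:
  assumes "k < l"
  shows "deriv_halfline (vq k) (\<lambda>t. - \<omega>0 k * vp k t)"
  unfolding deriv_halfline_def vp_def vq_def
proof (intro allI impI)
  fix t :: real assume "t \<ge> 0"
  then show "((\<lambda>t. v t (2*k+1)) has_real_derivative - \<omega>0 k * v t (2*k)) (at t within {0..})"
    using leader[rule_format, of t "2*k+1"] mulv_Smat_odd[OF assms] assms by simp
qed

lemma leader_solution:
  assumes "k < l" "t \<ge> 0"
  shows "vp k t = vp k 0 * cos (\<omega>0 k * t) + vq k 0 * sin (\<omega>0 k * t)"
    and "vq k t = vq k 0 * cos (\<omega>0 k * t) - vp k 0 * sin (\<omega>0 k * t)"
proof -
  define d1 where "d1 t = vp k t - (vp k 0 * cos (\<omega>0 k * t) + vq k 0 * sin (\<omega>0 k * t))" for t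
  define d2 where "d2 t = vq k t - (vq k 0 * cos (\<omega>0 k * t) - vp k 0 * sin (\<omega>0 k * t))" for t
  have "deriv_halfline d1 (\<lambda>t. \<omega>0 k * d2 t)" "deriv_halfline d2 (\<lambda>t. - \<omega>0 k * d1 t)"
    using deriv_vp[OF assms(1)] deriv_vq[OF assms(1)] unfolding deriv_halfline_def d1_def d2_def
    by (auto intro!: derivative_eq_intros simp: algebra_simps)
  then have "deriv_halfline (\<lambda>t. (d1 t)\<^sup>2 + (d2 t)\<^sup>2) (\<lambda>t. 0)"
    unfolding deriv_halfline_def
    by (auto intro!: derivative_eq_intros simp: algebra_simps)
  from deriv_halfline_zero_const[OF this assms(2)]
  have "(d1 t)\<^sup>2 + (d2 t)\<^sup>2 = 0" unfolding d1_def d2_def by simp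
  then have "d1 t = 0" "d2 t = 0" by simp_all
  then show "vp k t = vp k 0 * cos (\<omega>0 k * t) + vq k 0 * sin (\<omega>0 k * t)"
    and "vq k t = vq k 0 * cos (\<omega>0 k * t) - vp k 0 * sin (\<omega>0 k * t)"
    unfolding d1_def d2_def by simp_all
qed

lemma amp_sq_eq:
  assumes "k < l" "t \<ge> 0"
  shows "(vp k t)\<^sup>2 + (vq k t)\<^sup>2 = amp_sq k"
proof -
  have "(a * c + b * s)\<^sup>2 + (b * c - a * s)\<^sup>2 = (a\<^sup>2 + b\<^sup>2) * (s\<^sup>2 + c\<^sup>2)" for a b c s :: real
    by (simp add: power2_eq_square algebra_simps)
  then show ?thesis unfolding leader_solution[OF assms] amp_sq_def by simp
qed

lemma amp_sq_pos: "k < l \<Longrightarrow> 0 < amp_sq k"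
  unfolding amp_sq_def vp_def vq_def using v_init by (auto simp: add_pos_nonneg add_nonneg_pos)

lemma bounded_lipschitz_vp: "k < l \<Longrightarrow> bounded_lipschitz_halfline (vp k)"
  and bounded_lipschitz_vq: "k < l \<Longrightarrow> bounded_lipschitz_halfline (vq k)"
proof -
  assume k: "k < l"
  have "(vp k t)\<^sup>2 \<le> amp_sq k" "(vq k t)\<^sup>2 \<le> amp_sq k" if "t \<ge> 0" for t
    using amp_sq_eq[OF k that] zero_le_power2[of "vp k t"] zero_le_power2[of "vq k t"] by linarith+
  then have bounded: "bounded_halfline (vp k)" "bounded_halfline (vq k)"
    by (auto intro: bounded_halfline_of_square_le)
  show "bounded_lipschitz_halfline (vp k)"
    by (rule bounded_lipschitz_halfline_of_deriv[OF deriv_vp[OF k] bounded(1)])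
      (intro bounded_halfline_mult bounded_halfline_const bounded(2))
  show "bounded_lipschitz_halfline (vq k)"
    by (rule bounded_lipschitz_halfline_of_deriv[OF deriv_vq[OF k] bounded(2)])
      (intro bounded_halfline_mult bounded_halfline_const bounded(1))
qed

lemma v_continuous: "c < 2*l \<Longrightarrow> continuous_on {0..} (\<lambda>s. v s c)"
  by (rule DERIV_continuous_on) (use leader in auto)

lemma v_bounded: "\<exists>B. \<forall>t\<ge>0. \<forall>c<2*l. \<bar>v t c\<bar> \<le> B"
proof -
  have "\<bar>v t c\<bar> \<le> sqrt (\<Sum>k<l. amp_sq k)" if "t \<ge> 0" "c < 2*l" for t c
  proof -
    define k where "k = c div 2"
    have k: "k < l" using that(2) unfolding k_def by simp
    have "(v t c)\<^sup>2 \<le> (vp k t)\<^sup>2 + (vq k t)\<^sup>2"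
      unfolding vp_def vq_def k_def by (cases "even c") (auto elim!: evenE oddE)
    also have "\<dots> = amp_sq k" by (rule amp_sq_eq[OF k that(1)])
    also have "\<dots> \<le> (\<Sum>k<l. amp_sq k)"
      by (rule member_le_sum) (use k amp_sq_pos in \<open>auto intro: less_imp_le\<close>)
    finally show ?thesis using real_sqrt_le_mono by fastforce
  qed
  then show ?thesis by blast
qed

definition cos_coeff :: "rvec \<Rightarrow> nat \<Rightarrow> real" where
  "cos_coeff x k = x (2*k) * vp k 0 + x (2*k+1) * vq k 0"

definition sin_coeff :: "rvec \<Rightarrow> nat \<Rightarrow> real" where
  "sin_coeff x k = x (2*k) * vq k 0 - x (2*k+1) * vp k 0"

lemma inner_v_eq_harmonic_sum:
  assumes "s \<ge> 0"
  shows "(\<Sum>c<2*l. x c * v s c)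
    = (\<Sum>k<l. cos_coeff x k * cos (\<omega>0 k * s) + sin_coeff x k * sin (\<omega>0 k * s))"
  unfolding sum_lessThan_pairs
proof (rule sum.cong[OF refl])
  fix k assume "k \<in> {..<l}"
  then have "v s (2*k) = vp k 0 * cos (\<omega>0 k * s) + vq k 0 * sin (\<omega>0 k * s)"
    "v s (2*k+1) = vq k 0 * cos (\<omega>0 k * s) - vp k 0 * sin (\<omega>0 k * s)"
    using leader_solution[of k s] assms unfolding vp_def[of k s] vq_def[of k s] by auto
  then show "x (2*k) * v s (2*k) + x (2*k+1) * v s (2*k+1)
      = cos_coeff x k * cos (\<omega>0 k * s) + sin_coeff x k * sin (\<omega>0 k * s)"
    unfolding cos_coeff_def sin_coeff_def by (simp only:) (simp add: algebra_simps)
qed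

lemma sum_coeff_sq_ge:
  assumes "\<forall>k<l. \<rho> \<le> amp_sq k"
  shows "\<rho> * (\<Sum>c<2*l. (x c)\<^sup>2) \<le> (\<Sum>k<l. (cos_coeff x k)\<^sup>2 + (sin_coeff x k)\<^sup>2)"
proof -
  have "\<rho> * (\<Sum>c<2*l. (x c)\<^sup>2) = (\<Sum>k<l. \<rho> * ((x (2*k))\<^sup>2 + (x (2*k+1))\<^sup>2))"
    unfolding sum_lessThan_pairs by (simp add: sum_distrib_left)
  also have "\<dots> \<le> (\<Sum>k<l. ((x (2*k))\<^sup>2 + (x (2*k+1))\<^sup>2) * amp_sq k)"
    using assms by (intro sum_mono) (auto simp: mult.commute intro: mult_right_mono)
  also have "\<dots> = (\<Sum>k<l. (cos_coeff x k)\<^sup>2 + (sin_coeff x k)\<^sup>2)"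
    unfolding cos_coeff_def sin_coeff_def amp_sq_def by (simp add: power2_eq_square algebra_simps)
  finally show ?thesis .
qed

lemma PE_leader:
  assumes "\<forall>k<l. \<omega>0 k > 0" "\<forall>k<l. \<forall>k'<l. k \<noteq> k' \<longrightarrow> \<omega>0 k \<noteq> \<omega>0 k'"
  shows "PE (2*l) v"
proof -
  obtain \<gamma> where \<gamma>: "\<gamma> > 0" "\<forall>k<l. \<gamma> \<le> \<omega>0 k" "\<forall>k<l. \<forall>j<l. k \<noteq> j \<longrightarrow> \<gamma> \<le> \<bar>\<omega>0 k - \<omega>0 j\<bar>"
    using frequency_gap[OF assms] by blast
  have "\<forall>k\<in>{..<l}. 0 < amp_sq k" using amp_sq_pos by simp
  with finite_lessThan obtain \<rho> where "\<rho> > 0" "\<forall>k\<in>{..<l}. \<rho> \<le> amp_sq k"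
    by (rule finite_positive_lower_bound)
  then have \<rho>: "\<rho> > 0" "\<forall>k<l. \<rho> \<le> amp_sq k" by auto
  define T0 where "T0 = 32 * (l + 1) / \<gamma>"
  have T0: "T0 > 0" "T0 / 4 \<le> T0 / 2 - 8 * real l / \<gamma>"
    unfolding T0_def using \<gamma>(1) by (auto simp: field_simps)
  have form: "0 \<le> (\<Sum>i<2*l. \<Sum>j<2*l. x i * ((1/T0) * integral {t..t+T0} (\<lambda>s. v s i * v s j)
                 - (if i = j then \<rho>/4 else 0)) * x j)" if t: "t \<ge> 0" for t and x :: rvec
  proof -
    define S where "S = (\<Sum>k<l. (cos_coeff x k)\<^sup>2 + (sin_coeff x k)\<^sup>2)"
    have "T0 / 4 * S \<le> (T0 / 2 - 8 * real l / \<gamma>) * S"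
      using T0(2) unfolding S_def by (intro mult_right_mono sum_nonneg) auto
    also have "\<dots> \<le> integral {t..t+T0}
        (\<lambda>s. (\<Sum>k<l. cos_coeff x k * cos (\<omega>0 k * s) + sin_coeff x k * sin (\<omega>0 k * s))\<^sup>2)"
      unfolding S_def using \<gamma> T0(1) by (intro integral_square_harmonic_sum_ge) auto
    also have "\<dots> = integral {t..t+T0} (\<lambda>s. (\<Sum>c<2*l. x c * v s c)\<^sup>2)"
      using t by (intro integral_cong) (simp add: inner_v_eq_harmonic_sum)
    finally have "S / 4 \<le> (1/T0) * integral {t..t+T0} (\<lambda>s. (\<Sum>c<2*l. x c * v s c)\<^sup>2)"
      using T0(1) by (simp add: field_simps)
    moreover have "\<rho> / 4 * (\<Sum>c<2*l. (x c)\<^sup>2) \<le> S / 4"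
      using sum_coeff_sq_ge[OF \<rho>(2), of x] unfolding S_def by simp
    moreover have "continuous_on {t..t+T0} (\<lambda>s. v s c)" if "c < 2*l" for c
      using continuous_on_subset[OF v_continuous[OF that]] t by auto
    ultimately show ?thesis by (subst quadratic_form_integral) auto
  qed
  show ?thesis
    by (rule PE_I[OF v_bounded _ T0(1) form]) (use \<rho>(1) in simp)
qed

end

section \<open>Convergence of the frequency estimates\<close>

locale follower_network = harmonic_leader l \<omega>0 v
  for l :: nat and \<omega>0 :: rvec and v :: "real \<Rightarrow> rvec" +
  fixes N :: nat and E :: "nat \<Rightarrow> nat \<Rightarrow> bool"
    and \<eta> :: "nat \<Rightarrow> real \<Rightarrow> rvec" and \<omega> :: "nat \<Rightarrow> real \<Rightarrow> rvec"
    and \<mu>1 \<mu>2 :: real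
  assumes E_nodes: "\<forall>i j. E j i \<longrightarrow> j \<le> N \<and> i \<le> N"
    and spanning: "\<forall>i\<in>{1..N}. E\<^sup>*\<^sup>* 0 i"
    and undirected: "\<forall>i\<in>{1..N}. \<forall>j\<in>{1..N}. E j i \<longleftrightarrow> E i j"
    and mu_pos: "\<mu>1 > 0" "\<mu>2 > 0"
    and eta0: "\<forall>t. \<eta> 0 t = v t"
    and eta_ode: "\<forall>i\<in>{1..N}. \<forall>t\<ge>0. \<forall>k<2*l.
        ((\<lambda>s. \<eta> i s k) has_real_derivative
           (mulv (2*l) (Smat (\<omega> i t)) (\<eta> i t) k
            + \<mu>1 * (\<Sum>j\<in>{j. j \<le> N \<and> E j i}. \<eta> j t k - \<eta> i t k))) (at t within {0..})"
    and omega_ode: "\<forall>i\<in>{1..N}. \<forall>t\<ge>0. \<forall>k<l.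
        ((\<lambda>s. \<omega> i s k) has_real_derivative
           \<mu>2 * mulv (2*l) (phim (\<lambda>c. \<Sum>j\<in>{j. j \<le> N \<and> E j i}. \<eta> j t c - \<eta> i t c))
                      (\<eta> i t) k) (at t within {0..})"
begin

definition nbrs :: "nat \<Rightarrow> nat set" where "nbrs i = {j \<in> {1..N}. E j i}"

sublocale G: finite_undirected_graph "{1..N}" nbrs
  using undirected by unfold_locales (auto simp: nbrs_def)

definition P :: "nat \<Rightarrow> nat \<Rightarrow> real \<Rightarrow> real" where "P i k t = \<eta> i t (2*k) - v t (2*k)"
definition Q :: "nat \<Rightarrow> nat \<Rightarrow> real \<Rightarrow> real" where "Q i k t = \<eta> i t (2*k+1) - v t (2*k+1)"
definition W :: "nat \<Rightarrow> nat \<Rightarrow> real \<Rightarrow> real" where "W i k t = \<omega> i t k - \<omega>0 k"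

definition eP :: "nat \<Rightarrow> nat \<Rightarrow> real \<Rightarrow> real" where
  "eP i k t = G.local_error (E 0) (\<lambda>j. P j k t) i"
definition eQ :: "nat \<Rightarrow> nat \<Rightarrow> real \<Rightarrow> real" where
  "eQ i k t = G.local_error (E 0) (\<lambda>j. Q j k t) i"

definition Pd :: "nat \<Rightarrow> nat \<Rightarrow> real \<Rightarrow> real" where
  "Pd i k t = \<omega>0 k * Q i k t + W i k t * (Q i k t + vq k t) + \<mu>1 * eP i k t"
definition Qd :: "nat \<Rightarrow> nat \<Rightarrow> real \<Rightarrow> real" where
  "Qd i k t = \<mu>1 * eQ i k t - \<omega>0 k * P i k t - W i k t * (P i k t + vp k t)"
definition Wd :: "nat \<Rightarrow> nat \<Rightarrow> real \<Rightarrow> real" where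
  "Wd i k t = \<mu>2 * (eP i k t * (Q i k t + vq k t) - eQ i k t * (P i k t + vp k t))"

lemma P_leader: "P 0 k t = 0" and Q_leader: "Q 0 k t = 0"
  unfolding P_def Q_def using eta0 by auto

lemma neighbour_sum_eq_local_error:
  assumes "i \<in> {1..N}"
  shows "(\<Sum>j\<in>{j. j \<le> N \<and> E j i}. \<eta> j t c - \<eta> i t c)
    = G.local_error (E 0) (\<lambda>j. \<eta> j t c - v t c) i"
proof -
  have "{j. j \<le> N \<and> E j i} = nbrs i \<union> (if E 0 i then {0} else {})"
    using E_nodes unfolding nbrs_def by (cases "E 0 i") (auto simp: Suc_le_eq intro: gr0I)
  moreover have "finite (nbrs i)" "0 \<notin> nbrs i"
    using G.finite_nbrs[OF assms] unfolding nbrs_def by auto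
  ultimately have "(\<Sum>j\<in>{j. j \<le> N \<and> E j i}. \<eta> j t c - \<eta> i t c)
      = (\<Sum>j\<in>nbrs i. \<eta> j t c - \<eta> i t c) + (if E 0 i then \<eta> 0 t c - \<eta> i t c else 0)"
    by (cases "E 0 i") simp_all
  then show ?thesis
    unfolding G.local_error_def using eta0 by (cases "E 0 i") (simp_all add: algebra_simps)
qed

lemma deriv_P:
  assumes i: "i \<in> {1..N}" and k: "k < l"
  shows "deriv_halfline (P i k) (Pd i k)"
  unfolding deriv_halfline_def
proof (intro allI impI)
  fix t :: real assume t: "t \<ge> 0"
  have "((\<lambda>s. \<eta> i s (2*k)) has_real_derivative \<omega> i t k * \<eta> i t (2*k+1) + \<mu>1 * eP i k t)
      (at t within {0..})"
    using eta_ode[rule_format, OF i t, of "2*k"] k mulv_Smat_even[OF k]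
    by (simp add: neighbour_sum_eq_local_error[OF i] eP_def P_def)
  moreover have "((\<lambda>s. v s (2*k)) has_real_derivative \<omega>0 k * v t (2*k+1)) (at t within {0..})"
    using leader[rule_format, OF t, of "2*k"] k mulv_Smat_even[OF k] by simp
  ultimately have "(P i k has_real_derivative
      (\<omega> i t k * \<eta> i t (2*k+1) + \<mu>1 * eP i k t) - \<omega>0 k * v t (2*k+1)) (at t within {0..})"
    unfolding P_def by (rule DERIV_diff)
  moreover have "(\<omega> i t k * \<eta> i t (2*k+1) + \<mu>1 * eP i k t) - \<omega>0 k * v t (2*k+1) = Pd i k t"
    unfolding Pd_def Q_def W_def vq_def by (simp add: algebra_simps)
  ultimately show "(P i k has_real_derivative Pd i k t) (at t within {0..})" by simp
qed

lemma deriv_Q: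
  assumes i: "i \<in> {1..N}" and k: "k < l"
  shows "deriv_halfline (Q i k) (Qd i k)"
  unfolding deriv_halfline_def
proof (intro allI impI)
  fix t :: real assume t: "t \<ge> 0"
  have "((\<lambda>s. \<eta> i s (2*k+1)) has_real_derivative - \<omega> i t k * \<eta> i t (2*k) + \<mu>1 * eQ i k t)
      (at t within {0..})"
    using eta_ode[rule_format, OF i t, of "2*k+1"] k mulv_Smat_odd[OF k]
    by (simp add: neighbour_sum_eq_local_error[OF i] eQ_def Q_def)
  moreover have "((\<lambda>s. v s (2*k+1)) has_real_derivative - \<omega>0 k * v t (2*k)) (at t within {0..})"
    using leader[rule_format, OF t, of "2*k+1"] k mulv_Smat_odd[OF k] by simp
  ultimately have "(Q i k has_real_derivative
      (- \<omega> i t k * \<eta> i t (2*k) + \<mu>1 * eQ i k t) - - \<omega>0 k * v t (2*k)) (at t within {0..})"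
    unfolding Q_def by (rule DERIV_diff)
  moreover have "(- \<omega> i t k * \<eta> i t (2*k) + \<mu>1 * eQ i k t) - - \<omega>0 k * v t (2*k) = Qd i k t"
    unfolding Qd_def P_def W_def vp_def by (simp add: algebra_simps)
  ultimately show "(Q i k has_real_derivative Qd i k t) (at t within {0..})" by simp
qed

lemma deriv_W:
  assumes i: "i \<in> {1..N}" and k: "k < l"
  shows "deriv_halfline (W i k) (Wd i k)"
  unfolding deriv_halfline_def
proof (intro allI impI)
  fix t :: real assume t: "t \<ge> 0"
  have "((\<lambda>s. \<omega> i s k) has_real_derivative
      \<mu>2 * (eP i k t * \<eta> i t (2*k+1) - eQ i k t * \<eta> i t (2*k))) (at t within {0..})"
    using omega_ode[rule_format, OF i t k] mulv_phim[OF k]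
    by (simp add: neighbour_sum_eq_local_error[OF i] eP_def eQ_def P_def Q_def)
  then have "(W i k has_real_derivative
      \<mu>2 * (eP i k t * \<eta> i t (2*k+1) - eQ i k t * \<eta> i t (2*k))) (at t within {0..})"
    unfolding W_def by (rule DERIV_diff[OF _ DERIV_const, simplified])
  moreover have "\<mu>2 * (eP i k t * \<eta> i t (2*k+1) - eQ i k t * \<eta> i t (2*k)) = Wd i k t"
    unfolding Wd_def P_def Q_def vp_def vq_def by simp
  ultimately show "(W i k has_real_derivative Wd i k t) (at t within {0..})" by simp
qed

definition V :: "nat \<Rightarrow> real \<Rightarrow> real" where
  "V k t = G.disagreement (E 0) (\<lambda>i. P i k t) + G.disagreement (E 0) (\<lambda>i. Q i k t)"

definition lyap :: "nat \<Rightarrow> real \<Rightarrow> real" where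
  "lyap k t = V k t + (1/\<mu>2) * (\<Sum>i\<in>{1..N}. (W i k t)\<^sup>2)"

definition lyap' :: "nat \<Rightarrow> real \<Rightarrow> real" where
  "lyap' k t = -2 * \<mu>1 * (\<Sum>i\<in>{1..N}. (eP i k t)\<^sup>2 + (eQ i k t)\<^sup>2)"

lemma deriv_lyap: "k < l \<Longrightarrow> deriv_halfline (lyap k) (lyap' k)"
  unfolding deriv_halfline_def
proof (intro allI impI)
  fix t :: real assume k: "k < l" and t: "t \<ge> 0"
  have deriv_at: "(P i k has_real_derivative Pd i k t) (at t within {0..})"
    "(Q i k has_real_derivative Qd i k t) (at t within {0..})"
    "(W i k has_real_derivative Wd i k t) (at t within {0..})" if "i \<in> {1..N}" for i
    using deriv_P[OF that k] deriv_Q[OF that k] deriv_W[OF that k] t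
    unfolding deriv_halfline_def by auto
  have V': "(V k has_real_derivative
      -2 * (\<Sum>i\<in>{1..N}. Pd i k t * eP i k t) + -2 * (\<Sum>i\<in>{1..N}. Qd i k t * eQ i k t))
      (at t within {0..})"
    unfolding V_def[abs_def] eP_def eQ_def using deriv_at
    by (intro DERIV_add G.has_real_derivative_disagreement) auto
  have W': "((\<lambda>s. \<Sum>i\<in>{1..N}. (W i k s)\<^sup>2) has_real_derivative
      (\<Sum>i\<in>{1..N}. 2 * W i k t * Wd i k t)) (at t within {0..})"
    using deriv_at by (intro DERIV_sum) (auto intro!: derivative_eq_intros)
  have node: "-2 * (Pd i k t * eP i k t) + -2 * (Qd i k t * eQ i k t)
        + (1/\<mu>2) * (2 * W i k t * Wd i k t)
      = -2 * \<omega>0 k * (Q i k t * eP i k t - P i k t * eQ i k t)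
        + -2 * \<mu>1 * ((eP i k t)\<^sup>2 + (eQ i k t)\<^sup>2)" for i
    unfolding Pd_def Qd_def Wd_def using mu_pos by (simp add: field_simps power2_eq_square)
  \<comment> \<open>The coupling through \<open>\<omega>0\<close> cancels because the Laplacian is symmetric.\<close>
  have cross: "(\<Sum>i\<in>{1..N}. Q i k t * eP i k t - P i k t * eQ i k t) = 0"
    unfolding sum_subtractf eP_def eQ_def G.sum_mult_local_error_commute[of "\<lambda>i. Q i k t"] by simp
  have "-2 * (\<Sum>i\<in>{1..N}. Pd i k t * eP i k t) + -2 * (\<Sum>i\<in>{1..N}. Qd i k t * eQ i k t)
      + (1/\<mu>2) * (\<Sum>i\<in>{1..N}. 2 * W i k t * Wd i k t)
      = -2 * \<omega>0 k * (\<Sum>i\<in>{1..N}. Q i k t * eP i k t - P i k t * eQ i k t) + lyap' k t"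
    unfolding lyap'_def by (simp only: sum_distrib_left sum.distrib[symmetric] node)
  then show "(lyap k has_real_derivative lyap' k t) (at t within {0..})"
    unfolding lyap_def[abs_def] cross using DERIV_add[OF V' DERIV_cmult[OF W', of "1/\<mu>2"]] by simp
qed

lemma V_nonneg: "0 \<le> V k t"
  unfolding V_def by (intro add_nonneg_nonneg G.disagreement_nonneg)

lemma V_le_lyap: "V k t \<le> lyap k t"
  unfolding lyap_def using mu_pos by (simp add: sum_nonneg)

lemma W_sq_le_lyap:
  assumes "i \<in> {1..N}"
  shows "(W i k t)\<^sup>2 \<le> \<mu>2 * lyap k t"
proof -
  have "(W i k t)\<^sup>2 \<le> (\<Sum>i\<in>{1..N}. (W i k t)\<^sup>2)"
    using assms by (intro member_le_sum) auto
  also have "\<dots> \<le> \<mu>2 * V k t + (\<Sum>i\<in>{1..N}. (W i k t)\<^sup>2)"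
    using mult_nonneg_nonneg[OF less_imp_le[OF mu_pos(2)] V_nonneg[of k t]] by linarith
  also have "\<dots> = \<mu>2 * lyap k t"
    unfolding lyap_def using mu_pos by (simp add: field_simps)
  finally show ?thesis .
qed

lemma lyap'_nonpos: "lyap' k t \<le> 0"
proof -
  have "0 \<le> \<mu>1 * (\<Sum>i\<in>{1..N}. (eP i k t)\<^sup>2 + (eQ i k t)\<^sup>2)"
    using mu_pos by (intro mult_nonneg_nonneg sum_nonneg) auto
  then show ?thesis unfolding lyap'_def by simp
qed

lemma lyap_antimono: "k < l \<Longrightarrow> 0 \<le> s \<Longrightarrow> s \<le> t \<Longrightarrow> lyap k t \<le> lyap k s"
  using deriv_halfline_antimono[OF deriv_lyap] lyap'_nonpos by blast

lemma reachable_square_le_disagreement: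
  assumes "E\<^sup>*\<^sup>* 0 i"
  shows "\<exists>C\<ge>0. \<forall>p. p 0 = 0 \<longrightarrow> (p i)\<^sup>2 \<le> C * G.disagreement (E 0) p"
  using assms
proof (induction rule: rtranclp_induct)
  case base
  show ?case by auto
next
  case (step y z)
  then have z: "z \<le> N" using E_nodes by blast
  show ?case
  proof (cases "z = 0")
    case True then show ?thesis by auto
  next
    case False
    show ?thesis
    proof (cases "y = 0")
      case True
      then show ?thesis using G.pinned_le_disagreement[of z "E 0"] step.hyps(2) z False
        by (intro exI[of _ 1]) auto
    next
      case y: False
      obtain C where C: "C \<ge> 0" "\<forall>p. p 0 = 0 \<longrightarrow> (p y)\<^sup>2 \<le> C * G.disagreement (E 0) p"
        using step.IH by blast
      have "(p z)\<^sup>2 \<le> (2 * C + 4) * G.disagreement (E 0) p" if "p 0 = 0" for p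
      proof -
        have "0 \<le> (p z - 2 * p y)\<^sup>2" by simp
        then have "(p z)\<^sup>2 \<le> 2 * (p y)\<^sup>2 + 4 * ((1/2) * (p z - p y)\<^sup>2)"
          by (simp add: power2_eq_square algebra_simps)
        moreover have "(1/2) * (p z - p y)\<^sup>2 \<le> G.disagreement (E 0) p"
          using G.edge_le_disagreement[of z y p "E 0"] step.hyps(2) z False y E_nodes
          by (auto simp: nbrs_def)
        moreover have "(p y)\<^sup>2 \<le> C * G.disagreement (E 0) p" using C(2) that by blast
        ultimately show ?thesis unfolding distrib_right mult.assoc by linarith
      qed
      then show ?thesis using C(1) by (intro exI[of _ "2 * C + 4"]) auto
    qed
  qed
qed

lemma errors_sq_le_V:
  assumes "i \<in> {1..N}"
  obtains C where "C \<ge> 0" "\<And>k t. (P i k t)\<^sup>2 + (Q i k t)\<^sup>2 \<le> C * V k t"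
proof -
  obtain C where C: "C \<ge> 0" "\<forall>p. p 0 = 0 \<longrightarrow> (p i)\<^sup>2 \<le> C * G.disagreement (E 0) p"
    using reachable_square_le_disagreement[of i] spanning assms by blast
  have "(P i k t)\<^sup>2 + (Q i k t)\<^sup>2 \<le> C * V k t" for k t
    unfolding V_def distrib_left
    using C(2)[rule_format, of "\<lambda>j. P j k t"] C(2)[rule_format, of "\<lambda>j. Q j k t"] P_leader Q_leader
    by (simp add: add_mono)
  with C(1) show ?thesis by (rule that)
qed

lemma bounded_errors:
  assumes "i \<in> {1..N}" "k < l"
  shows "bounded_halfline (P i k)" "bounded_halfline (Q i k)" "bounded_halfline (W i k)"
proof -
  obtain C where C: "C \<ge> 0" "\<And>k t. (P i k t)\<^sup>2 + (Q i k t)\<^sup>2 \<le> C * V k t"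
    using errors_sq_le_V[OF assms(1)] by blast
  have lyap_le: "lyap k t \<le> lyap k 0" if "t \<ge> 0" for t
    using lyap_antimono[OF assms(2) _ that] by simp
  have "(P i k t)\<^sup>2 + (Q i k t)\<^sup>2 \<le> C * lyap k 0" if "t \<ge> 0" for t
    using C V_le_lyap[of k t] lyap_le[OF that] by (meson mult_left_mono order_trans)
  then have "(P i k t)\<^sup>2 \<le> C * lyap k 0" "(Q i k t)\<^sup>2 \<le> C * lyap k 0" if "t \<ge> 0" for t
    using that zero_le_power2[of "P i k t"] zero_le_power2[of "Q i k t"] by (smt (verit))+
  moreover have "(W i k t)\<^sup>2 \<le> \<mu>2 * lyap k 0" if "t \<ge> 0" for t
    using W_sq_le_lyap[OF assms(1), of k t] lyap_le[OF that] mu_pos by (smt (verit) mult_left_mono)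
  ultimately show "bounded_halfline (P i k)" "bounded_halfline (Q i k)" "bounded_halfline (W i k)"
    by (auto intro!: bounded_halfline_of_square_le)
qed

lemma bounded_lipschitz_errors:
  assumes "i \<in> {1..N}" "k < l"
  shows "bounded_lipschitz_halfline (P i k)" "bounded_lipschitz_halfline (Q i k)"
    "bounded_lipschitz_halfline (W i k)"
proof -
  note bounded = bounded_errors[OF assms]
  have local_errors: "bounded_halfline (eP i k)" "bounded_halfline (eQ i k)"
    unfolding eP_def[abs_def] eQ_def[abs_def]
    by (rule G.bounded_halfline_local_error[OF assms(1)], use assms(2) bounded_errors in blast)+
  have leader: "bounded_halfline (vp k)" "bounded_halfline (vq k)"
    using bounded_lipschitz_vp bounded_lipschitz_vq assms(2)
    unfolding bounded_lipschitz_halfline_def by auto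
  have "bounded_halfline (Pd i k)" "bounded_halfline (Qd i k)" "bounded_halfline (Wd i k)"
    unfolding Pd_def[abs_def] Qd_def[abs_def] Wd_def[abs_def]
    by (intro bounded_halfline_add bounded_halfline_diff bounded_halfline_mult
        bounded_halfline_const bounded local_errors leader)+
  then show "bounded_lipschitz_halfline (P i k)" "bounded_lipschitz_halfline (Q i k)"
    "bounded_lipschitz_halfline (W i k)"
    using deriv_P[OF assms] deriv_Q[OF assms] deriv_W[OF assms] bounded
    by (auto intro: bounded_lipschitz_halfline_of_deriv)
qed

lemma bounded_lipschitz_local_errors:
  assumes "i \<in> {1..N}" "k < l"
  shows "bounded_lipschitz_halfline (eP i k)" "bounded_lipschitz_halfline (eQ i k)"
  unfolding eP_def[abs_def] eQ_def[abs_def]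
  by (rule G.bounded_lipschitz_halfline_local_error[OF assms(1)],
      use assms(2) bounded_lipschitz_errors in blast)+

lemma bounded_lipschitz_error_derivs:
  assumes "i \<in> {1..N}" "k < l"
  shows "bounded_lipschitz_halfline (Pd i k)" "bounded_lipschitz_halfline (Qd i k)"
  unfolding Pd_def[abs_def] Qd_def[abs_def]
  by (intro bounded_lipschitz_halfline_add bounded_lipschitz_halfline_diff
      bounded_lipschitz_halfline_mult bounded_lipschitz_halfline_const
      bounded_lipschitz_errors[OF assms] bounded_lipschitz_local_errors[OF assms]
      bounded_lipschitz_vp[OF assms(2)] bounded_lipschitz_vq[OF assms(2)])+

lemma lyap'_tendsto_zero:
  assumes "k < l"
  shows "(lyap' k \<longlongrightarrow> 0) at_top"
proof -
  obtain L where "(lyap k \<longlongrightarrow> L) at_top"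
    using antimono_bounded_below_convergent[of "lyap k" 0] lyap_antimono[OF assms]
      order_trans[OF V_nonneg V_le_lyap] by blast
  moreover have "lipschitz_halfline (lyap' k)"
  proof -
    have "bounded_lipschitz_halfline (lyap' k)"
      unfolding lyap'_def[abs_def] power2_eq_square
      by (intro bounded_lipschitz_halfline_mult bounded_lipschitz_halfline_const
          bounded_lipschitz_halfline_sum bounded_lipschitz_halfline_add finite_atLeastAtMost)
        (use bounded_lipschitz_local_errors assms in auto)
    then show ?thesis unfolding bounded_lipschitz_halfline_def by blast
  qed
  ultimately show ?thesis by (rule barbalat[OF deriv_lyap[OF assms]])
qed

lemma local_errors_tendsto_zero:
  assumes "i \<in> {1..N}" "k < l"
  shows "(eP i k \<longlongrightarrow> 0) at_top" "(eQ i k \<longlongrightarrow> 0) at_top"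
proof -
  have lim: "((\<lambda>t. lyap' k t / (-2 * \<mu>1)) \<longlongrightarrow> 0) at_top"
    using tendsto_divide[OF lyap'_tendsto_zero[OF assms(2)] tendsto_const, of "-2 * \<mu>1"] mu_pos
    by simp
  have le: "(eP i k t)\<^sup>2 + (eQ i k t)\<^sup>2 \<le> lyap' k t / (-2 * \<mu>1)" for t
  proof -
    have "(eP i k t)\<^sup>2 + (eQ i k t)\<^sup>2 \<le> (\<Sum>i\<in>{1..N}. (eP i k t)\<^sup>2 + (eQ i k t)\<^sup>2)"
      using assms(1) by (intro member_le_sum) auto
    also have "\<dots> = lyap' k t / (-2 * \<mu>1)"
      unfolding lyap'_def using mu_pos by simp
    finally show ?thesis .
  qed
  have "(eP i k t)\<^sup>2 \<le> lyap' k t / (-2 * \<mu>1)" "(eQ i k t)\<^sup>2 \<le> lyap' k t / (-2 * \<mu>1)" for t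
    using le[of t] zero_le_power2[of "eP i k t"] zero_le_power2[of "eQ i k t"] by linarith+
  then show "(eP i k \<longlongrightarrow> 0) at_top" "(eQ i k \<longlongrightarrow> 0) at_top"
    using tendsto_zero_of_square_le[OF lim] by auto
qed

lemma V_tendsto_zero:
  assumes "k < l"
  shows "(V k \<longlongrightarrow> 0) at_top"
proof -
  have eq: "V k = (\<lambda>t. - (\<Sum>i\<in>{1..N}. P i k t * eP i k t) - (\<Sum>i\<in>{1..N}. Q i k t * eQ i k t))"
    unfolding V_def[abs_def] eP_def eQ_def G.sum_mult_local_error_self by simp
  have products: "((\<lambda>t. P i k t * eP i k t) \<longlongrightarrow> 0) at_top" "((\<lambda>t. Q i k t * eQ i k t) \<longlongrightarrow> 0) at_top"
    if "i \<in> {1..N}" for i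
    using tendsto_zero_bounded_mult[OF bounded_errors(1)[OF that assms] local_errors_tendsto_zero(1)[OF that assms]]
      tendsto_zero_bounded_mult[OF bounded_errors(2)[OF that assms] local_errors_tendsto_zero(2)[OF that assms]] .
  have "((\<lambda>t. \<Sum>i\<in>{1..N}. P i k t * eP i k t) \<longlongrightarrow> 0) at_top"
    "((\<lambda>t. \<Sum>i\<in>{1..N}. Q i k t * eQ i k t) \<longlongrightarrow> 0) at_top"
    by (rule tendsto_null_sum, rule products, assumption)+
  then have "((\<lambda>t. - (\<Sum>i\<in>{1..N}. P i k t * eP i k t) - (\<Sum>i\<in>{1..N}. Q i k t * eQ i k t))
      \<longlongrightarrow> - 0 - 0) at_top"
    by (rule tendsto_diff[OF tendsto_minus])
  with eq show ?thesis by simp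
qed

lemma errors_tendsto_zero:
  assumes "i \<in> {1..N}" "k < l"
  shows "(P i k \<longlongrightarrow> 0) at_top" "(Q i k \<longlongrightarrow> 0) at_top"
proof -
  obtain C where C: "C \<ge> 0" "\<And>k t. (P i k t)\<^sup>2 + (Q i k t)\<^sup>2 \<le> C * V k t"
    using errors_sq_le_V[OF assms(1)] by blast
  have lim: "((\<lambda>t. C * V k t) \<longlongrightarrow> 0) at_top"
    by (rule tendsto_mult_right_zero[OF V_tendsto_zero[OF assms(2)]])
  have "(P i k t)\<^sup>2 \<le> C * V k t" "(Q i k t)\<^sup>2 \<le> C * V k t" for t
    using C(2)[of k t] zero_le_power2[of "P i k t"] zero_le_power2[of "Q i k t"] by linarith+
  then show "(P i k \<longlongrightarrow> 0) at_top" "(Q i k \<longlongrightarrow> 0) at_top"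
    using tendsto_zero_of_square_le[OF lim] by auto
qed

lemma error_derivs_tendsto_zero:
  assumes "i \<in> {1..N}" "k < l"
  shows "(Pd i k \<longlongrightarrow> 0) at_top" "(Qd i k \<longlongrightarrow> 0) at_top"
  using barbalat[OF deriv_P[OF assms] errors_tendsto_zero(1)[OF assms]]
    barbalat[OF deriv_Q[OF assms] errors_tendsto_zero(2)[OF assms]]
    bounded_lipschitz_error_derivs[OF assms]
  unfolding bounded_lipschitz_halfline_def by auto

lemma W_tendsto_zero:
  assumes "i \<in> {1..N}" "k < l"
  shows "(W i k \<longlongrightarrow> 0) at_top"
proof -
  note lims = errors_tendsto_zero[OF assms] error_derivs_tendsto_zero[OF assms]
    local_errors_tendsto_zero[OF assms]
  note W_bounded = bounded_errors(3)[OF assms]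
  have "((\<lambda>t. Pd i k t - \<omega>0 k * Q i k t - W i k t * Q i k t - \<mu>1 * eP i k t)
      \<longlongrightarrow> 0 - \<omega>0 k * 0 - 0 - \<mu>1 * 0) at_top"
    by (intro tendsto_diff tendsto_mult_left tendsto_zero_bounded_mult[OF W_bounded] lims)
  then have Wvq: "((\<lambda>t. W i k t * vq k t) \<longlongrightarrow> 0) at_top"
    unfolding Pd_def by (simp add: algebra_simps)
  have "((\<lambda>t. \<mu>1 * eQ i k t - \<omega>0 k * P i k t - W i k t * P i k t - Qd i k t)
      \<longlongrightarrow> \<mu>1 * 0 - \<omega>0 k * 0 - 0 - 0) at_top"
    by (intro tendsto_diff tendsto_mult_left tendsto_zero_bounded_mult[OF W_bounded] lims)
  then have Wvp: "((\<lambda>t. W i k t * vp k t) \<longlongrightarrow> 0) at_top"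
    unfolding Qd_def by (simp add: algebra_simps)
  have "((\<lambda>t. ((W i k t * vp k t)\<^sup>2 + (W i k t * vq k t)\<^sup>2) / amp_sq k)
      \<longlongrightarrow> (0\<^sup>2 + 0\<^sup>2) / amp_sq k) at_top"
    using amp_sq_pos[OF assms(2)]
    by (intro tendsto_divide tendsto_add tendsto_power tendsto_const Wvp Wvq) simp
  then have lim: "((\<lambda>t. ((W i k t * vp k t)\<^sup>2 + (W i k t * vq k t)\<^sup>2) / amp_sq k) \<longlongrightarrow> 0) at_top"
    by simp
  have "(W i k t)\<^sup>2 = ((W i k t * vp k t)\<^sup>2 + (W i k t * vq k t)\<^sup>2) / amp_sq k" if "t \<ge> 0" for t
  proof -
    have "(W i k t * vp k t)\<^sup>2 + (W i k t * vq k t)\<^sup>2 = (W i k t)\<^sup>2 * ((vp k t)\<^sup>2 + (vq k t)\<^sup>2)"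
      by (simp add: power_mult_distrib distrib_left)
    then show ?thesis
      using amp_sq_eq[OF assms(2) that] amp_sq_pos[OF assms(2)] by simp
  qed
  then show ?thesis
    by (intro tendsto_zero_of_square_le[OF lim]) simp
qed

end

theorem lemma3:
  fixes N l :: nat and \<omega>0 :: rvec and v :: "real \<Rightarrow> rvec"
    and E :: "nat \<Rightarrow> nat \<Rightarrow> bool"
    and \<eta> :: "nat \<Rightarrow> real \<Rightarrow> rvec" and \<omega> :: "nat \<Rightarrow> real \<Rightarrow> rvec"
    and \<mu>1 \<mu>2 :: real
  assumes N_pos: "N > 0" and l_pos: "l > 0"
    and omega_pos: "\<forall>k<l. \<omega>0 k > 0"
    and omega_distinct: "\<forall>k<l. \<forall>k'<l. k \<noteq> k' \<longrightarrow> \<omega>0 k \<noteq> \<omega>0 k'"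
    and leader: "\<forall>t\<ge>0. \<forall>k<2*l.
        ((\<lambda>s. v s k) has_real_derivative mulv (2*l) (Smat \<omega>0) (v t) k) (at t within {0..})"
    and E_nodes: "\<forall>i j. E j i \<longrightarrow> j \<le> N \<and> i \<le> N"
    and spanning: "\<forall>i\<in>{1..N}. E\<^sup>*\<^sup>* 0 i"
    and undirected: "\<forall>i\<in>{1..N}. \<forall>j\<in>{1..N}. E j i \<longleftrightarrow> E i j"
    and mu_pos: "\<mu>1 > 0" "\<mu>2 > 0"
    and eta0: "\<forall>t. \<eta> 0 t = v t"
    and eta_ode: "\<forall>i\<in>{1..N}. \<forall>t\<ge>0. \<forall>k<2*l.
        ((\<lambda>s. \<eta> i s k) has_real_derivative
           (mulv (2*l) (Smat (\<omega> i t)) (\<eta> i t) k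
            + \<mu>1 * (\<Sum>j\<in>{j. j \<le> N \<and> E j i}. \<eta> j t k - \<eta> i t k))) (at t within {0..})"
    and omega_ode: "\<forall>i\<in>{1..N}. \<forall>t\<ge>0. \<forall>k<l.
        ((\<lambda>s. \<omega> i s k) has_real_derivative
           \<mu>2 * mulv (2*l) (phim (\<lambda>c. \<Sum>j\<in>{j. j \<le> N \<and> E j i}. \<eta> j t c - \<eta> i t c))
                      (\<eta> i t) k) (at t within {0..})"
    and v_init: "\<forall>k<l. v 0 (2*k) \<noteq> 0 \<or> v 0 (2*k+1) \<noteq> 0"
  shows "PE (2*l) v \<and>
         (\<forall>i\<in>{1..N}. \<forall>k<l. ((\<lambda>t. \<omega> i t k - \<omega>0 k) \<longlongrightarrow> 0) at_top)"
proof -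
  interpret follower_network l \<omega>0 v N E \<eta> \<omega> \<mu>1 \<mu>2
    by unfold_locales (fact leader v_init E_nodes spanning undirected mu_pos eta0 eta_ode omega_ode)+
  have "PE (2*l) v"
    using PE_leader omega_pos omega_distinct by blast
  moreover have "((\<lambda>t. \<omega> i t k - \<omega>0 k) \<longlongrightarrow> 0) at_top" if "i \<in> {1..N}" "k < l" for i k
    using W_tendsto_zero[OF that] unfolding W_def .
  ultimately show ?thesis by blast
qed

end
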